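(* Let $\Lambda$ be an artin algebra and let $(g_i: X\to M_i)_{i\in I}$ be a family of nonzero maps of $\Lambda$-modules with each $M_i$ indecomposable. Then this family is a fork if and only if $g_i\notin\sum_{j\neq i}\operatorname{Hom}(M_j,M_i)\,g_j$ for all $i\in I$.
   Context: Modules are finite length left $\Lambda$-modules. A map $g: X\to M$ is left minimal if the image of $g$ is not contained in any proper direct summand of $M$. A family of maps $(g_i: X\to M_i)_{i\in I}$ is a fork if for every finite subset $J\subseteq I$ the map $(g_i)_{i\in J}: X\to\bigoplus_{i\in J}M_i$ is left minimal. Here $\sum_{j\neq i}\operatorname{Hom}(M_j,M_i)g_j$ denotes the set of finite sums of maps $p_jg_j$ with $j\neq i$ and $p_j: M_j\to M_i$. *)

theory Defs
  imports "HOL-Algebra.Algebra"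
begin

text \<open>Left modules over a (not necessarily commutative) ring R, using the
  module record of HOL-Algebra (whose locale module requires cring).\<close>

definition lmodule :: "('a, 'c) ring_scheme \<Rightarrow> ('a, 'b, 'd) module_scheme \<Rightarrow> bool" where
  "lmodule R M \<longleftrightarrow> ring R \<and> abelian_group M \<and>
    (\<forall>a\<in>carrier R. \<forall>x\<in>carrier M. a \<odot>\<^bsub>M\<^esub> x \<in> carrier M) \<and>
    (\<forall>a\<in>carrier R. \<forall>b\<in>carrier R. \<forall>x\<in>carrier M.
        (a \<oplus>\<^bsub>R\<^esub> b) \<odot>\<^bsub>M\<^esub> x = a \<odot>\<^bsub>M\<^esub> x \<oplus>\<^bsub>M\<^esub> b \<odot>\<^bsub>M\<^esub> x) \<and>
    (\<forall>a\<in>carrier R. \<forall>x\<in>carrier M. \<forall>y\<in>carrier M.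
        a \<odot>\<^bsub>M\<^esub> (x \<oplus>\<^bsub>M\<^esub> y) = a \<odot>\<^bsub>M\<^esub> x \<oplus>\<^bsub>M\<^esub> a \<odot>\<^bsub>M\<^esub> y) \<and>
    (\<forall>a\<in>carrier R. \<forall>b\<in>carrier R. \<forall>x\<in>carrier M.
        (a \<otimes>\<^bsub>R\<^esub> b) \<odot>\<^bsub>M\<^esub> x = a \<odot>\<^bsub>M\<^esub> (b \<odot>\<^bsub>M\<^esub> x)) \<and>
    (\<forall>x\<in>carrier M. \<one>\<^bsub>R\<^esub> \<odot>\<^bsub>M\<^esub> x = x)"

definition lsubmodule :: "('a, 'c) ring_scheme \<Rightarrow> ('a, 'b, 'd) module_scheme \<Rightarrow> 'b set \<Rightarrow> bool" where
  "lsubmodule R M U \<longleftrightarrow> U \<subseteq> carrier M \<and> \<zero>\<^bsub>M\<^esub> \<in> U \<and>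
    (\<forall>x\<in>U. \<forall>y\<in>U. x \<oplus>\<^bsub>M\<^esub> y \<in> U) \<and> (\<forall>x\<in>U. \<ominus>\<^bsub>M\<^esub> x \<in> U) \<and>
    (\<forall>a\<in>carrier R. \<forall>x\<in>U. a \<odot>\<^bsub>M\<^esub> x \<in> U)"

definition lhom :: "('a, 'c) ring_scheme \<Rightarrow> ('a, 'b, 'd) module_scheme \<Rightarrow> ('a, 'e, 'f) module_scheme
    \<Rightarrow> ('b \<Rightarrow> 'e) \<Rightarrow> bool" where
  "lhom R Xm M f \<longleftrightarrow> (\<forall>x\<in>carrier Xm. f x \<in> carrier M) \<and>
    (\<forall>x\<in>carrier Xm. \<forall>y\<in>carrier Xm. f (add Xm x y) = add M (f x) (f y)) \<and>
    (\<forall>a\<in>carrier R. \<forall>x\<in>carrier Xm. f (smult Xm a x) = smult M a (f x))"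

definition finite_length :: "('a, 'c) ring_scheme \<Rightarrow> ('a, 'b, 'd) module_scheme \<Rightarrow> bool" where
  "finite_length R M \<longleftrightarrow> (\<exists>n::nat. \<forall>(C::nat \<Rightarrow> 'b set) k.
     (\<forall>i\<le>k. lsubmodule R M (C i)) \<and> (\<forall>i<k. C i \<subset> C (Suc i)) \<longrightarrow> k \<le> n)"

definition direct_summand :: "('a, 'c) ring_scheme \<Rightarrow> ('a, 'b, 'd) module_scheme \<Rightarrow> 'b set \<Rightarrow> bool" where
  "direct_summand R M U \<longleftrightarrow> lsubmodule R M U \<and>
    (\<exists>V. lsubmodule R M V \<and> U \<inter> V = {\<zero>\<^bsub>M\<^esub>} \<and>
         (\<forall>x\<in>carrier M. \<exists>u\<in>U. \<exists>v\<in>V. x = u \<oplus>\<^bsub>M\<^esub> v))"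

definition indecomposable :: "('a, 'c) ring_scheme \<Rightarrow> ('a, 'b, 'd) module_scheme \<Rightarrow> bool" where
  "indecomposable R M \<longleftrightarrow> carrier M \<noteq> {\<zero>\<^bsub>M\<^esub>} \<and>
    (\<forall>U. direct_summand R M U \<longrightarrow> U = {\<zero>\<^bsub>M\<^esub>} \<or> U = carrier M)"

definition left_minimal :: "('a, 'c) ring_scheme \<Rightarrow> ('a, 'b, 'd) module_scheme \<Rightarrow> ('a, 'e, 'f) module_scheme
    \<Rightarrow> ('b \<Rightarrow> 'e) \<Rightarrow> bool" where
  "left_minimal R Xm N g \<longleftrightarrow>
    \<not> (\<exists>U. direct_summand R N U \<and> U \<noteq> carrier N \<and> g ` carrier Xm \<subseteq> U)"

text \<open>Direct sum of the family M over a (finite) index set J; elements are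
  functions on J, extended by undefined outside J.\<close>
definition dsum :: "('i \<Rightarrow> ('a, 'b) module) \<Rightarrow> 'i set \<Rightarrow> ('a, 'i \<Rightarrow> 'b) module" where
  "dsum M J = \<lparr> carrier = {f. (\<forall>j\<in>J. f j \<in> carrier (M j)) \<and> (\<forall>j. j \<notin> J \<longrightarrow> f j = undefined)},
      monoid.mult = (\<lambda>f h. undefined), monoid.one = undefined,
      ring.zero = (\<lambda>j\<in>J. \<zero>\<^bsub>M j\<^esub>),
      ring.add = (\<lambda>f h. \<lambda>j\<in>J. f j \<oplus>\<^bsub>M j\<^esub> h j),
      module.smult = (\<lambda>a f. \<lambda>j\<in>J. a \<odot>\<^bsub>M j\<^esub> f j) \<rparr>"

definition tuple_map :: "('i \<Rightarrow> 'c \<Rightarrow> 'b) \<Rightarrow> 'i set \<Rightarrow> 'c \<Rightarrow> ('i \<Rightarrow> 'b)" where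
  "tuple_map g J = (\<lambda>x. \<lambda>j\<in>J. g j x)"

definition fork :: "('a, 'r) ring_scheme \<Rightarrow> ('a, 'c) module \<Rightarrow> ('i \<Rightarrow> ('a, 'b) module)
    \<Rightarrow> ('i \<Rightarrow> 'c \<Rightarrow> 'b) \<Rightarrow> 'i set \<Rightarrow> bool" where
  "fork R Xm M g I \<longleftrightarrow> (\<forall>J. finite J \<and> J \<subseteq> I \<longrightarrow> left_minimal R Xm (dsum M J) (tuple_map g J))"

definition in_sum_others :: "('a, 'r) ring_scheme \<Rightarrow> ('a, 'c) module \<Rightarrow> ('i \<Rightarrow> ('a, 'b) module)
    \<Rightarrow> ('i \<Rightarrow> 'c \<Rightarrow> 'b) \<Rightarrow> 'i set \<Rightarrow> 'i \<Rightarrow> bool" where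
  "in_sum_others R Xm M g I i \<longleftrightarrow> (\<exists>F (p :: 'i \<Rightarrow> 'b \<Rightarrow> 'b). finite F \<and> F \<subseteq> I - {i} \<and>
     (\<forall>j\<in>F. lhom R (M j) (M i) (p j)) \<and>
     (\<forall>x\<in>carrier Xm. g i x = finsum (M i) (\<lambda>j. p j (g j x)) F))"

definition artinian_ring :: "('a, 'r) ring_scheme \<Rightarrow> bool" where
  "artinian_ring S \<longleftrightarrow> cring S \<and> (\<forall>C::nat \<Rightarrow> 'a set.
     (\<forall>n. ideal (C n) S \<and> C (Suc n) \<subseteq> C n) \<longrightarrow> (\<exists>N. \<forall>n\<ge>N. C n = C N))"

definition artin_algebra :: "('a, 'r) ring_scheme \<Rightarrow> bool" where
  "artin_algebra R \<longleftrightarrow> ring R \<and> (\<exists>S. subring S R \<and>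
     (\<forall>s\<in>S. \<forall>a\<in>carrier R. s \<otimes>\<^bsub>R\<^esub> a = a \<otimes>\<^bsub>R\<^esub> s) \<and>
     artinian_ring (R\<lparr>carrier := S\<rparr>) \<and>
     (\<exists>F. finite F \<and> F \<subseteq> carrier R \<and>
        (\<forall>a\<in>carrier R. \<exists>c. (\<forall>x\<in>F. c x \<in> S) \<and> a = finsum R (\<lambda>x. c x \<otimes>\<^bsub>R\<^esub> x) F)))"

end

theory Submission
  imports Defs
begin

text \<open>If \<open>g i = (\<Sum>j\<in>F. p j \<circ> g j)\<close> with \<open>i \<notin> F\<close>, the kernel of
  \<open>f \<mapsto> f i - (\<Sum>j\<in>F. p j (f j))\<close> is a proper direct summand of the direct sum over
  \<open>insert i F\<close> (the inclusion of \<open>M i\<close> splits it) and contains the image of the family, so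
  the family is not a fork. Conversely, suppose that for a finite \<open>J \<subseteq> I\<close> the image of
  \<open>tuple_map g J\<close> lies in a proper direct summand \<open>U\<close>. The projection onto a complement
  of \<open>U\<close> is a nonzero idempotent endomorphism of the direct sum. By Fitting's lemma every
  \<open>M j\<close> has a local endomorphism ring, and then a nonzero idempotent matrix has a split
  column: there are \<open>i\<close> and \<open>\<pi>\<close> from the direct sum to \<open>M i\<close>, vanishing on \<open>U\<close>, whose
  restriction to \<open>M i\<close> is an automorphism. Solving \<open>\<pi> (tuple_map g J x) = 0\<close> for \<open>g i x\<close>
  exhibits \<open>g i\<close> as a combination of the other \<open>g j\<close>. The split column is found by
  induction on \<open>J\<close>, passing to the Schur complement of a diagonal entry.\<close>

section \<open>Left modules and their homomorphisms\<close>

lemma lmodule_abelian_group: "lmodule R M \<Longrightarrow> abelian_group M"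
  by (simp add: lmodule_def)

lemma lmodule_smult_closed:
  "lmodule R M \<Longrightarrow> a \<in> carrier R \<Longrightarrow> x \<in> carrier M \<Longrightarrow> a \<odot>\<^bsub>M\<^esub> x \<in> carrier M"
  by (simp add: lmodule_def)

lemma lmodule_smult_add:
  "lmodule R M \<Longrightarrow> a \<in> carrier R \<Longrightarrow> x \<in> carrier M \<Longrightarrow> y \<in> carrier M \<Longrightarrow>
   a \<odot>\<^bsub>M\<^esub> (x \<oplus>\<^bsub>M\<^esub> y) = a \<odot>\<^bsub>M\<^esub> x \<oplus>\<^bsub>M\<^esub> a \<odot>\<^bsub>M\<^esub> y"
  by (simp add: lmodule_def)

lemma (in abelian_group) minus_add_cancel:
  "x \<in> carrier G \<Longrightarrow> y \<in> carrier G \<Longrightarrow> (x \<ominus> y) \<oplus> y = x"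
  by (simp add: minus_eq a_assoc l_neg)

lemma (in abelian_group) minus_eq_zero_iff:
  "x \<in> carrier G \<Longrightarrow> y \<in> carrier G \<Longrightarrow> x \<ominus> y = \<zero> \<longleftrightarrow> x = y"
  by (metis minus_add_cancel l_zero r_neg minus_eq)

lemma (in abelian_group) eq_minus_if_add_eq:
  assumes "a \<oplus> b = c" and "a \<in> carrier G" and "b \<in> carrier G"
  shows "b = c \<ominus> a"
proof -
  have "c \<ominus> a = (b \<oplus> a) \<ominus> a" using assms by (simp add: a_comm)
  also have "\<dots> = b" using assms by (simp add: minus_eq a_assoc r_neg)
  finally show ?thesis by (rule sym)
qed

lemma additive_map_zero:
  assumes A: "abelian_group A" and B: "abelian_group B"
    and closed: "\<And>x. x \<in> carrier A \<Longrightarrow> f x \<in> carrier B"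
    and add: "\<And>x y. x \<in> carrier A \<Longrightarrow> y \<in> carrier A \<Longrightarrow> f (x \<oplus>\<^bsub>A\<^esub> y) = f x \<oplus>\<^bsub>B\<^esub> f y"
  shows "f \<zero>\<^bsub>A\<^esub> = \<zero>\<^bsub>B\<^esub>"
proof -
  interpret A: abelian_group A by fact
  interpret B: abelian_group B by fact
  have "f \<zero>\<^bsub>A\<^esub> = f \<zero>\<^bsub>A\<^esub> \<oplus>\<^bsub>B\<^esub> f \<zero>\<^bsub>A\<^esub>"
    using add[of "\<zero>\<^bsub>A\<^esub>" "\<zero>\<^bsub>A\<^esub>"] by simp
  then show ?thesis
    using closed[of "\<zero>\<^bsub>A\<^esub>"] by (metis A.zero_closed B.add.r_cancel_one' B.zero_closed B.r_zero)
qed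

lemma additive_map_neg:
  assumes A: "abelian_group A" and B: "abelian_group B"
    and closed: "\<And>x. x \<in> carrier A \<Longrightarrow> f x \<in> carrier B"
    and add: "\<And>x y. x \<in> carrier A \<Longrightarrow> y \<in> carrier A \<Longrightarrow> f (x \<oplus>\<^bsub>A\<^esub> y) = f x \<oplus>\<^bsub>B\<^esub> f y"
    and x: "x \<in> carrier A"
  shows "f (\<ominus>\<^bsub>A\<^esub> x) = \<ominus>\<^bsub>B\<^esub> f x"
proof -
  interpret A: abelian_group A by fact
  interpret B: abelian_group B by fact
  have "f (\<ominus>\<^bsub>A\<^esub> x) \<oplus>\<^bsub>B\<^esub> f x = f (\<ominus>\<^bsub>A\<^esub> x \<oplus>\<^bsub>A\<^esub> x)"
    using add x by simp
  also have "\<dots> = \<zero>\<^bsub>B\<^esub>"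
    using x additive_map_zero[OF A B closed add] by (simp add: A.l_neg)
  finally show ?thesis using closed x by (metis A.a_inv_closed B.minus_equality)
qed

lemma additive_map_finsum:
  assumes A: "abelian_group A" and B: "abelian_group B"
    and closed: "\<And>x. x \<in> carrier A \<Longrightarrow> f x \<in> carrier B"
    and add: "\<And>x y. x \<in> carrier A \<Longrightarrow> y \<in> carrier A \<Longrightarrow> f (x \<oplus>\<^bsub>A\<^esub> y) = f x \<oplus>\<^bsub>B\<^esub> f y"
    and S: "finite S" and h: "\<And>s. s \<in> S \<Longrightarrow> h s \<in> carrier A"
  shows "f (finsum A h S) = finsum B (\<lambda>s. f (h s)) S"
  using S h
proof (induction S rule: finite_induct)
  case empty
  then show ?case
    using additive_map_zero[OF A B closed add] A B by (simp add: abelian_group.axioms abelian_monoid.finsum_empty)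
next
  case (insert s S)
  interpret A: abelian_group A by fact
  interpret B: abelian_group B by fact
  have "finsum A h (insert s S) = h s \<oplus>\<^bsub>A\<^esub> finsum A h S"
    using insert by (intro A.finsum_insert) auto
  moreover have "finsum B (\<lambda>s. f (h s)) (insert s S) = f (h s) \<oplus>\<^bsub>B\<^esub> finsum B (\<lambda>s. f (h s)) S"
    using insert closed by (intro B.finsum_insert) auto
  ultimately show ?case using insert add A.finsum_closed by auto
qed

lemma lmodule_smult_zero: "lmodule R M \<Longrightarrow> a \<in> carrier R \<Longrightarrow> a \<odot>\<^bsub>M\<^esub> \<zero>\<^bsub>M\<^esub> = \<zero>\<^bsub>M\<^esub>"
  by (rule additive_map_zero[of M M "\<lambda>x. a \<odot>\<^bsub>M\<^esub> x"])
    (auto simp: lmodule_abelian_group lmodule_smult_closed lmodule_smult_add)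

lemma lmodule_smult_neg:
  "lmodule R M \<Longrightarrow> a \<in> carrier R \<Longrightarrow> x \<in> carrier M \<Longrightarrow> a \<odot>\<^bsub>M\<^esub> (\<ominus>\<^bsub>M\<^esub> x) = \<ominus>\<^bsub>M\<^esub> (a \<odot>\<^bsub>M\<^esub> x)"
  by (rule additive_map_neg[of M M "\<lambda>x. a \<odot>\<^bsub>M\<^esub> x"])
    (auto simp: lmodule_abelian_group lmodule_smult_closed lmodule_smult_add)

lemma lmodule_finsum_closed:
  "lmodule R G \<Longrightarrow> (\<And>l. l \<in> S \<Longrightarrow> f l \<in> carrier G) \<Longrightarrow> finsum G f S \<in> carrier G"
  by (intro abelian_monoid.finsum_closed abelian_group.axioms(1) lmodule_abelian_group) auto

lemma lmodule_finsum_insert: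
  "lmodule R G \<Longrightarrow> finite S \<Longrightarrow> s \<notin> S \<Longrightarrow> (\<And>l. l \<in> insert s S \<Longrightarrow> f l \<in> carrier G) \<Longrightarrow>
   finsum G f (insert s S) = f s \<oplus>\<^bsub>G\<^esub> finsum G f S"
  by (intro abelian_monoid.finsum_insert abelian_group.axioms(1) lmodule_abelian_group) auto

lemma lmodule_finsum_addf:
  "lmodule R G \<Longrightarrow> (\<And>l. l \<in> S \<Longrightarrow> f l \<in> carrier G) \<Longrightarrow> (\<And>l. l \<in> S \<Longrightarrow> g l \<in> carrier G) \<Longrightarrow>
   finsum G (\<lambda>l. f l \<oplus>\<^bsub>G\<^esub> g l) S = finsum G f S \<oplus>\<^bsub>G\<^esub> finsum G g S"
  by (intro abelian_monoid.finsum_addf abelian_group.axioms(1) lmodule_abelian_group) auto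

lemma lmodule_finsum_cong:
  "lmodule R G \<Longrightarrow> (\<And>l. l \<in> S \<Longrightarrow> f l = g l) \<Longrightarrow> (\<And>l. l \<in> S \<Longrightarrow> g l \<in> carrier G) \<Longrightarrow>
   finsum G f S = finsum G g S"
  by (intro abelian_monoid.finsum_cong' abelian_group.axioms(1) lmodule_abelian_group) auto

lemma lmodule_finsum_zero:
  assumes "lmodule R G" and "\<And>l. l \<in> S \<Longrightarrow> f l = \<zero>\<^bsub>G\<^esub>"
  shows "finsum G f S = \<zero>\<^bsub>G\<^esub>"
proof -
  interpret G: abelian_group G using assms(1) by (rule lmodule_abelian_group)
  show ?thesis using assms(2) by (rule G.add.finprod_one_eqI)
qed

lemma lhom_closed: "lhom R A B f \<Longrightarrow> x \<in> carrier A \<Longrightarrow> f x \<in> carrier B"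
  by (simp add: lhom_def)

lemma lhom_add:
  "lhom R A B f \<Longrightarrow> x \<in> carrier A \<Longrightarrow> y \<in> carrier A \<Longrightarrow> f (x \<oplus>\<^bsub>A\<^esub> y) = f x \<oplus>\<^bsub>B\<^esub> f y"
  by (simp add: lhom_def)

lemma lhom_smult:
  "lhom R A B f \<Longrightarrow> a \<in> carrier R \<Longrightarrow> x \<in> carrier A \<Longrightarrow> f (a \<odot>\<^bsub>A\<^esub> x) = a \<odot>\<^bsub>B\<^esub> f x"
  by (simp add: lhom_def)

lemma lhom_zero: "lmodule R A \<Longrightarrow> lmodule R B \<Longrightarrow> lhom R A B f \<Longrightarrow> f \<zero>\<^bsub>A\<^esub> = \<zero>\<^bsub>B\<^esub>"
  by (rule additive_map_zero[of A B f]) (auto simp: lmodule_abelian_group lhom_closed lhom_add)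

lemma lhom_neg:
  "lmodule R A \<Longrightarrow> lmodule R B \<Longrightarrow> lhom R A B f \<Longrightarrow> x \<in> carrier A \<Longrightarrow> f (\<ominus>\<^bsub>A\<^esub> x) = \<ominus>\<^bsub>B\<^esub> f x"
  by (rule additive_map_neg[of A B f]) (auto simp: lmodule_abelian_group lhom_closed lhom_add)

lemma lhom_minus:
  "lmodule R A \<Longrightarrow> lmodule R B \<Longrightarrow> lhom R A B f \<Longrightarrow> x \<in> carrier A \<Longrightarrow> y \<in> carrier A \<Longrightarrow>
   f (x \<ominus>\<^bsub>A\<^esub> y) = f x \<ominus>\<^bsub>B\<^esub> f y"
  unfolding a_minus_def
  by (simp add: lhom_add lhom_neg abelian_group.a_inv_closed lmodule_abelian_group)

lemma lhom_finsum:
  "lmodule R A \<Longrightarrow> lmodule R B \<Longrightarrow> lhom R A B f \<Longrightarrow> finite S \<Longrightarrow> (\<And>s. s \<in> S \<Longrightarrow> h s \<in> carrier A) \<Longrightarrow>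
   f (finsum A h S) = finsum B (\<lambda>s. f (h s)) S"
  by (rule additive_map_finsum[of A B f]) (auto simp: lmodule_abelian_group lhom_closed lhom_add)

lemma lhom_comp: "lhom R A B f \<Longrightarrow> lhom R B C g \<Longrightarrow> lhom R A C (\<lambda>x. g (f x))"
  by (simp add: lhom_def)

lemma lhom_id: "lhom R A A (\<lambda>x. x)"
  by (simp add: lhom_def)

lemma lhom_zero_map:
  assumes "lmodule R B"
  shows "lhom R A B (\<lambda>x. \<zero>\<^bsub>B\<^esub>)"
proof -
  interpret B: abelian_group B using assms by (rule lmodule_abelian_group)
  show ?thesis using assms by (simp add: lhom_def lmodule_smult_zero)
qed

lemma lhom_add_map:
  assumes B: "lmodule R B" and f: "lhom R A B f" and g: "lhom R A B g"
  shows "lhom R A B (\<lambda>x. f x \<oplus>\<^bsub>B\<^esub> g x)"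
proof -
  interpret B: abelian_group B using B by (rule lmodule_abelian_group)
  show ?thesis unfolding lhom_def
  proof (intro conjI ballI)
    fix x assume "x \<in> carrier A"
    then show "f x \<oplus>\<^bsub>B\<^esub> g x \<in> carrier B" using f g by (simp add: lhom_closed)
  next
    fix x y assume "x \<in> carrier A" "y \<in> carrier A"
    then show "f (x \<oplus>\<^bsub>A\<^esub> y) \<oplus>\<^bsub>B\<^esub> g (x \<oplus>\<^bsub>A\<^esub> y) = f x \<oplus>\<^bsub>B\<^esub> g x \<oplus>\<^bsub>B\<^esub> (f y \<oplus>\<^bsub>B\<^esub> g y)"
      using f g by (simp add: lhom_add lhom_closed B.a_ac)
  next
    fix a x assume "a \<in> carrier R" "x \<in> carrier A"
    then show "f (a \<odot>\<^bsub>A\<^esub> x) \<oplus>\<^bsub>B\<^esub> g (a \<odot>\<^bsub>A\<^esub> x) = a \<odot>\<^bsub>B\<^esub> (f x \<oplus>\<^bsub>B\<^esub> g x)"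
      using f g B by (simp add: lhom_smult lhom_closed lmodule_smult_add)
  qed
qed

lemma lhom_neg_map:
  assumes B: "lmodule R B" and f: "lhom R A B f"
  shows "lhom R A B (\<lambda>x. \<ominus>\<^bsub>B\<^esub> f x)"
proof -
  interpret B: abelian_group B using B by (rule lmodule_abelian_group)
  show ?thesis unfolding lhom_def
  proof (intro conjI ballI)
    fix x assume "x \<in> carrier A"
    then show "\<ominus>\<^bsub>B\<^esub> f x \<in> carrier B" using f by (simp add: lhom_closed)
  next
    fix x y assume "x \<in> carrier A" "y \<in> carrier A"
    then show "\<ominus>\<^bsub>B\<^esub> f (x \<oplus>\<^bsub>A\<^esub> y) = \<ominus>\<^bsub>B\<^esub> f x \<oplus>\<^bsub>B\<^esub> \<ominus>\<^bsub>B\<^esub> f y"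
      using f by (simp add: lhom_add lhom_closed B.minus_add)
  next
    fix a x assume "a \<in> carrier R" "x \<in> carrier A"
    then show "\<ominus>\<^bsub>B\<^esub> f (a \<odot>\<^bsub>A\<^esub> x) = a \<odot>\<^bsub>B\<^esub> (\<ominus>\<^bsub>B\<^esub> f x)"
      using f B by (simp add: lhom_smult lhom_closed lmodule_smult_neg)
  qed
qed

lemma lhom_minus_map:
  "lmodule R B \<Longrightarrow> lhom R A B f \<Longrightarrow> lhom R A B g \<Longrightarrow> lhom R A B (\<lambda>x. f x \<ominus>\<^bsub>B\<^esub> g x)"
  unfolding a_minus_def by (intro lhom_add_map lhom_neg_map)

lemma lhom_cong:
  assumes A: "lmodule R A" and f: "lhom R A B f" and eq: "\<And>x. x \<in> carrier A \<Longrightarrow> g x = f x"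
  shows "lhom R A B g"
proof -
  interpret A: abelian_group A using A by (rule lmodule_abelian_group)
  show ?thesis using f eq A unfolding lhom_def by (simp add: lmodule_smult_closed)
qed

lemma lhom_finsum_map:
  assumes A: "lmodule R A" and B: "lmodule R B" and S: "finite S"
    and F: "\<And>s. s \<in> S \<Longrightarrow> lhom R A B (F s)"
  shows "lhom R A B (\<lambda>x. finsum B (\<lambda>s. F s x) S)"
  using S F
proof (induction S rule: finite_induct)
  case empty
  then show ?case using lhom_zero_map[OF B] B
    by (simp add: lmodule_abelian_group abelian_group.axioms abelian_monoid.finsum_empty)
next
  case (insert s S)
  have sum: "lhom R A B (\<lambda>x. F s x \<oplus>\<^bsub>B\<^esub> finsum B (\<lambda>s. F s x) S)"
    using insert by (intro lhom_add_map[OF B]) auto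
  have "finsum B (\<lambda>s. F s x) (insert s S) = F s x \<oplus>\<^bsub>B\<^esub> finsum B (\<lambda>s. F s x) S"
    if "x \<in> carrier A" for x
    using insert that by (intro lmodule_finsum_insert[OF B]) (auto intro: lhom_closed)
  then show ?case by (rule lhom_cong[OF A sum])
qed

lemma lhom_inv_into:
  assumes A: "lmodule R A" and f: "lhom R A B f" and bij: "bij_betw f (carrier A) (carrier B)"
  shows "lhom R B A (inv_into (carrier A) f)"
proof -
  let ?g = "inv_into (carrier A) f"
  have g_closed: "\<And>y. y \<in> carrier B \<Longrightarrow> ?g y \<in> carrier A"
    using bij by (metis bij_betw_def inv_into_into)
  have fg: "\<And>y. y \<in> carrier B \<Longrightarrow> f (?g y) = y"
    using bij by (meson bij_betw_inv_into_right)
  have gf: "\<And>x. x \<in> carrier A \<Longrightarrow> ?g (f x) = x"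
    using bij by (meson bij_betw_inv_into_left)
  have "?g (x \<oplus>\<^bsub>B\<^esub> y) = ?g x \<oplus>\<^bsub>A\<^esub> ?g y" if "x \<in> carrier B" "y \<in> carrier B" for x y
    using gf[of "?g x \<oplus>\<^bsub>A\<^esub> ?g y"] that g_closed fg lhom_add[OF f]
      abelian_monoid.a_closed[OF abelian_group.axioms(1)[OF lmodule_abelian_group[OF A]]] by simp
  moreover have "?g (a \<odot>\<^bsub>B\<^esub> x) = a \<odot>\<^bsub>A\<^esub> ?g x" if "a \<in> carrier R" "x \<in> carrier B" for a x
    using gf[of "a \<odot>\<^bsub>A\<^esub> ?g x"] that g_closed fg lhom_smult[OF f] lmodule_smult_closed[OF A] by simp
  ultimately show ?thesis using g_closed by (simp add: lhom_def)
qed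

lemma lsubmodule_kernel:
  assumes A: "lmodule R A" and B: "lmodule R B" and f: "lhom R A B f"
  shows "lsubmodule R A {x \<in> carrier A. f x = \<zero>\<^bsub>B\<^esub>}"
proof -
  interpret A: abelian_group A using A by (rule lmodule_abelian_group)
  interpret B: abelian_group B using B by (rule lmodule_abelian_group)
  show ?thesis
    unfolding lsubmodule_def
    using lhom_zero[OF A B f] lhom_neg[OF A B f] lhom_add[OF f] lhom_smult[OF f]
      lmodule_smult_zero[OF B] lmodule_smult_closed[OF A]
    by (simp add: A.a_inv_closed A.zero_closed A.a_closed subset_iff)
qed

lemma lsubmodule_image:
  assumes A: "lmodule R A" and B: "lmodule R B" and f: "lhom R A B f"
  shows "lsubmodule R B (f ` carrier A)"
proof -
  interpret A: abelian_group A using A by (rule lmodule_abelian_group)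
  have "\<zero>\<^bsub>B\<^esub> \<in> f ` carrier A"
    using lhom_zero[OF A B f] A.zero_closed by (metis imageI)
  moreover have "f x \<oplus>\<^bsub>B\<^esub> f y \<in> f ` carrier A" if "x \<in> carrier A" "y \<in> carrier A" for x y
    using that lhom_add[OF f] by (metis A.a_closed imageI)
  moreover have "\<ominus>\<^bsub>B\<^esub> f x \<in> f ` carrier A" if "x \<in> carrier A" for x
    using that lhom_neg[OF A B f] by (metis A.a_inv_closed imageI)
  moreover have "a \<odot>\<^bsub>B\<^esub> f x \<in> f ` carrier A" if "a \<in> carrier R" "x \<in> carrier A" for a x
    using that lhom_smult[OF f] lmodule_smult_closed[OF A] by (metis imageI)
  ultimately show ?thesis
    using lhom_closed[OF f] unfolding lsubmodule_def by blast
qed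

section \<open>Fitting's lemma\<close>

lemma finite_length_ascending_chain:
  assumes "finite_length R M" and "\<And>n. lsubmodule R M (C n)" and "\<And>n. C n \<subseteq> C (Suc n)"
  obtains n where "C (Suc n) = C n"
proof -
  obtain N where N: "\<And>C k. \<forall>i\<le>k. lsubmodule R M (C i) \<Longrightarrow> \<forall>i<k. C i \<subset> C (Suc i) \<Longrightarrow> k \<le> N"
    using assms(1) unfolding finite_length_def by blast
  have "\<not> (\<forall>i<Suc N. C i \<subset> C (Suc i))"
  proof
    assume "\<forall>i<Suc N. C i \<subset> C (Suc i)"
    then have "Suc N \<le> N" using N assms(2) by blast
    then show False by simp
  qed
  then obtain i where "\<not> C i \<subset> C (Suc i)" by blast
  then have "C (Suc i) = C i" using assms(3)[of i] by blast
  then show ?thesis by (rule that)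
qed

lemma finite_length_descending_chain:
  assumes "finite_length R M" and "\<And>n. lsubmodule R M (C n)" and "\<And>n. C (Suc n) \<subseteq> C n"
  obtains n where "C (Suc n) = C n"
proof -
  obtain N where N: "\<And>C k. \<forall>i\<le>k. lsubmodule R M (C i) \<Longrightarrow> \<forall>i<k. C i \<subset> C (Suc i) \<Longrightarrow> k \<le> N"
    using assms(1) unfolding finite_length_def by blast
  have "\<not> (\<forall>i<Suc N. C (Suc N - i) \<subset> C (Suc N - Suc i))"
  proof
    assume "\<forall>i<Suc N. C (Suc N - i) \<subset> C (Suc N - Suc i)"
    then have "Suc N \<le> N" using N[of "Suc N" "\<lambda>i. C (Suc N - i)"] assms(2) by blast
    then show False by simp
  qed
  then obtain i where "\<not> C (Suc (N - i)) \<subset> C (N - i)"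
    by (auto simp: Suc_diff_le)
  then have "C (Suc (N - i)) = C (N - i)" using assms(3)[of "N - i"] by blast
  then show ?thesis by (rule that)
qed

lemma funpow_image_stable:
  fixes a :: "'a \<Rightarrow> 'a"
  assumes "(a ^^ Suc n) ` A = (a ^^ n) ` A"
  shows "(a ^^ (n + d)) ` A = (a ^^ n) ` A"
proof (induction d)
  case (Suc d)
  have "(a ^^ (n + Suc d)) ` A = (a ^^ (d + Suc n)) ` A" by (simp add: add.commute)
  also have "\<dots> = (a ^^ d) ` (a ^^ Suc n) ` A" by (simp only: image_comp funpow_add)
  also have "\<dots> = (a ^^ d) ` (a ^^ n) ` A" using assms by simp
  also have "\<dots> = (a ^^ (n + d)) ` A" by (simp only: image_comp funpow_add add.commute)
  finally show ?case using Suc by simp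
qed simp

lemma funpow_kernel_stable:
  assumes closed: "\<And>x. x \<in> A \<Longrightarrow> a x \<in> A"
    and stable: "{x \<in> A. (a ^^ Suc n) x = z} = {x \<in> A. (a ^^ n) x = z}"
  shows "{x \<in> A. (a ^^ (n + d)) x = z} = {x \<in> A. (a ^^ n) x = z}"
proof (induction d)
  case (Suc d)
  have "(a ^^ (n + Suc d)) x = z \<longleftrightarrow> (a ^^ (n + d)) x = z" if "x \<in> A" for x
  proof -
    have "(a ^^ d) x \<in> A" using that closed by (induction d) auto
    then have "(a ^^ Suc n) ((a ^^ d) x) = z \<longleftrightarrow> (a ^^ n) ((a ^^ d) x) = z"
      using stable by blast
    moreover have "(a ^^ (n + Suc d)) x = (a ^^ Suc n) ((a ^^ d) x)"
      using funpow_add[of "Suc n" d a] by simp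
    moreover have "(a ^^ (n + d)) x = (a ^^ n) ((a ^^ d) x)"
      using funpow_add[of n d a] by simp
    ultimately show ?thesis by simp
  qed
  then show ?case using Suc by auto
qed simp

lemma lhom_funpow: "lhom R M M a \<Longrightarrow> lhom R M M (a ^^ n)"
proof (induction n)
  case 0
  then show ?case using lhom_id[of R M] by (simp add: id_def)
next
  case (Suc n)
  then show ?case using lhom_comp[of R M M "a ^^ n" M a] by (simp add: comp_def)
qed

lemma lhom_inj_on:
  assumes A: "lmodule R A" and B: "lmodule R B" and f: "lhom R A B f"
    and ker: "\<And>x. x \<in> carrier A \<Longrightarrow> f x = \<zero>\<^bsub>B\<^esub> \<Longrightarrow> x = \<zero>\<^bsub>A\<^esub>"
  shows "inj_on f (carrier A)"
proof (rule inj_onI)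
  interpret A: abelian_group A using A by (rule lmodule_abelian_group)
  interpret B: abelian_group B using B by (rule lmodule_abelian_group)
  fix x y assume x: "x \<in> carrier A" and y: "y \<in> carrier A" and eq: "f x = f y"
  have "f (x \<ominus>\<^bsub>A\<^esub> y) = \<zero>\<^bsub>B\<^esub>"
    using lhom_minus[OF A B f x y] eq lhom_closed[OF f y] by (simp add: B.minus_eq_zero_iff)
  then have "x \<ominus>\<^bsub>A\<^esub> y = \<zero>\<^bsub>A\<^esub>" using x y ker by simp
  then show "x = y" using x y by (simp add: A.minus_eq_zero_iff)
qed

lemma funpow_kernel_image_stabilize:
  assumes M: "lmodule R M" and fl: "finite_length R M" and a: "lhom R M M a"
  obtains m where "0 < m"
    and "\<And>d. {x \<in> carrier M. (a ^^ (m + d)) x = \<zero>\<^bsub>M\<^esub>} = {x \<in> carrier M. (a ^^ m) x = \<zero>\<^bsub>M\<^esub>}"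
    and "\<And>d. (a ^^ (m + d)) ` carrier M = (a ^^ m) ` carrier M"
proof -
  define K where "K n = {x \<in> carrier M. (a ^^ n) x = \<zero>\<^bsub>M\<^esub>}" for n
  define Im where "Im n = (a ^^ n) ` carrier M" for n
  have pow: "\<And>n. lhom R M M (a ^^ n)" using a by (rule lhom_funpow)
  obtain n1 where n1: "K (Suc n1) = K n1"
  proof (rule finite_length_ascending_chain[OF fl])
    show "lsubmodule R M (K n)" for n unfolding K_def by (rule lsubmodule_kernel[OF M M pow])
    show "K n \<subseteq> K (Suc n)" for n
      unfolding K_def using lhom_zero[OF M M a] by auto
  qed
  obtain n2 where n2: "Im (Suc n2) = Im n2"
  proof (rule finite_length_descending_chain[OF fl])
    show "lsubmodule R M (Im n)" for n unfolding Im_def by (rule lsubmodule_image[OF M M pow])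
    show "Im (Suc n) \<subseteq> Im n" for n
      unfolding Im_def using lhom_closed[OF a]
      by (auto simp del: funpow.simps simp: funpow_Suc_right)
  qed
  have K_n1: "K (n1 + d) = K n1" for d
    unfolding K_def by (rule funpow_kernel_stable) (use lhom_closed[OF a] n1 in \<open>auto simp: K_def\<close>)
  have Im_n2: "Im (n2 + d) = Im n2" for d
    unfolding Im_def by (rule funpow_image_stable) (use n2 in \<open>simp add: Im_def\<close>)
  define m where "m = Suc (n1 + n2)"
  have K_m: "K (m + d) = K m" for d
    using K_n1[of "Suc n2 + d"] K_n1[of "Suc n2"] by (simp add: m_def add.assoc)
  have Im_m: "Im (m + d) = Im m" for d
    using Im_n2[of "Suc n1 + d"] Im_n2[of "Suc n1"] by (simp add: m_def ac_simps)
  show ?thesis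
  proof (rule that)
    show "0 < m" by (simp add: m_def)
    show "{x \<in> carrier M. (a ^^ (m + d)) x = \<zero>\<^bsub>M\<^esub>} = {x \<in> carrier M. (a ^^ m) x = \<zero>\<^bsub>M\<^esub>}" for d
      using K_m[of d] unfolding K_def .
    show "(a ^^ (m + d)) ` carrier M = (a ^^ m) ` carrier M" for d
      using Im_m[of d] unfolding Im_def .
  qed
qed

lemma fitting_decomposition:
  assumes M: "lmodule R M" and fl: "finite_length R M" and a: "lhom R M M a"
  obtains m where "0 < m"
    and "{x \<in> carrier M. (a ^^ m) x = \<zero>\<^bsub>M\<^esub>} \<inter> (a ^^ m) ` carrier M = {\<zero>\<^bsub>M\<^esub>}"
    and "\<forall>x\<in>carrier M. \<exists>u\<in>{x \<in> carrier M. (a ^^ m) x = \<zero>\<^bsub>M\<^esub>}. \<exists>v\<in>(a ^^ m) ` carrier M.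
           x = u \<oplus>\<^bsub>M\<^esub> v"
proof -
  interpret M: abelian_group M using M by (rule lmodule_abelian_group)
  obtain m where m: "0 < m"
    and K: "\<And>d. {x \<in> carrier M. (a ^^ (m + d)) x = \<zero>\<^bsub>M\<^esub>} = {x \<in> carrier M. (a ^^ m) x = \<zero>\<^bsub>M\<^esub>}"
    and Im: "\<And>d. (a ^^ (m + d)) ` carrier M = (a ^^ m) ` carrier M"
    by (rule funpow_kernel_image_stabilize[OF M fl a]) blast
  have pow: "lhom R M M (a ^^ m)" using a by (rule lhom_funpow)
  have cap: "{x \<in> carrier M. (a ^^ m) x = \<zero>\<^bsub>M\<^esub>} \<inter> (a ^^ m) ` carrier M = {\<zero>\<^bsub>M\<^esub>}"
  proof (intro equalityI subsetI)
    fix y assume "y \<in> {x \<in> carrier M. (a ^^ m) x = \<zero>\<^bsub>M\<^esub>} \<inter> (a ^^ m) ` carrier M"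
    then obtain x where x: "x \<in> carrier M" and y: "y = (a ^^ m) x" and "(a ^^ m) y = \<zero>\<^bsub>M\<^esub>" by blast
    then have "x \<in> {x \<in> carrier M. (a ^^ (m + m)) x = \<zero>\<^bsub>M\<^esub>}" by (simp add: funpow_add)
    then have "(a ^^ m) x = \<zero>\<^bsub>M\<^esub>" unfolding K by simp
    then show "y \<in> {\<zero>\<^bsub>M\<^esub>}" using y by simp
  next
    fix y assume "y \<in> {\<zero>\<^bsub>M\<^esub>}"
    moreover have zero: "(a ^^ m) \<zero>\<^bsub>M\<^esub> = \<zero>\<^bsub>M\<^esub>" by (rule lhom_zero[OF M M pow])
    moreover have "\<zero>\<^bsub>M\<^esub> \<in> (a ^^ m) ` carrier M"
      by (rule image_eqI[where f = "a ^^ m", OF sym[OF zero] M.zero_closed])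
    ultimately show "y \<in> {x \<in> carrier M. (a ^^ m) x = \<zero>\<^bsub>M\<^esub>} \<inter> (a ^^ m) ` carrier M"
      by simp
  qed
  have span: "\<exists>u\<in>{x \<in> carrier M. (a ^^ m) x = \<zero>\<^bsub>M\<^esub>}. \<exists>v\<in>(a ^^ m) ` carrier M. x = u \<oplus>\<^bsub>M\<^esub> v"
    if x: "x \<in> carrier M" for x
  proof -
    have "(a ^^ m) x \<in> (a ^^ (m + m)) ` carrier M" unfolding Im using x by (rule imageI)
    then obtain z where z: "z \<in> carrier M" "(a ^^ m) x = (a ^^ (m + m)) z" by blast
    define v where "v = (a ^^ m) z"
    have v: "v \<in> carrier M" "v \<in> (a ^^ m) ` carrier M" unfolding v_def using z lhom_closed[OF pow] by auto
    have "(a ^^ m) x = (a ^^ m) v" using z(2) unfolding v_def by (simp add: funpow_add)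
    then have "(a ^^ m) (x \<ominus>\<^bsub>M\<^esub> v) = \<zero>\<^bsub>M\<^esub>"
      using x v lhom_minus[OF M M pow] lhom_closed[OF pow] by (simp add: M.minus_eq_zero_iff)
    show ?thesis
    proof (intro bexI)
      show "x = (x \<ominus>\<^bsub>M\<^esub> v) \<oplus>\<^bsub>M\<^esub> v" using x v by (simp add: M.minus_add_cancel)
      show "x \<ominus>\<^bsub>M\<^esub> v \<in> {x \<in> carrier M. (a ^^ m) x = \<zero>\<^bsub>M\<^esub>}"
        using x v \<open>(a ^^ m) (x \<ominus>\<^bsub>M\<^esub> v) = \<zero>\<^bsub>M\<^esub>\<close> by simp
    qed (rule v(2))
  qed
  show ?thesis by (rule that[OF m cap]) (use span in blast)
qed

lemma bij_betw_if_funpow_bij: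
  assumes m: "0 < m" and closed: "a ` A \<subseteq> A" and bij: "bij_betw (a ^^ m) A A"
  shows "bij_betw a A A"
proof -
  obtain k where k: "m = Suc k" using m gr0_implies_Suc by blast
  have pow1: "(a ^^ m) x = (a ^^ k) (a x)" for x
    unfolding k funpow_Suc_right by simp
  have pow2: "(a ^^ m) x = a ((a ^^ k) x)" for x
    unfolding k by simp
  have "inj_on a A"
  proof (rule inj_onI)
    fix x y assume x: "x \<in> A" and y: "y \<in> A" and "a x = a y"
    then have "(a ^^ m) x = (a ^^ m) y" using pow1 by simp
    then show "x = y" using bij x y unfolding bij_betw_def by (blast dest: inj_onD)
  qed
  moreover have "A \<subseteq> a ` A"
  proof
    fix y assume "y \<in> A"
    then have "y \<in> (a ^^ m) ` A" using bij by (simp add: bij_betw_def)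
    then obtain z where z: "z \<in> A" "y = a ((a ^^ k) z)" using pow2 by auto
    have "(a ^^ k) z \<in> A" using z(1) closed by (induction k) auto
    then show "y \<in> a ` A" using z(2) by blast
  qed
  ultimately show ?thesis using closed unfolding bij_betw_def by blast
qed

lemma indecomposable_summand_cases:
  assumes "indecomposable R M" and "direct_summand R M U"
  shows "U = {\<zero>\<^bsub>M\<^esub>} \<or> U = carrier M"
  using assms unfolding indecomposable_def by (elim conjE allE impE)

theorem fitting_lemma:
  assumes M: "lmodule R M" and fl: "finite_length R M" and ind: "indecomposable R M"
    and a: "lhom R M M a"
  shows "bij_betw a (carrier M) (carrier M) \<or> (\<exists>m. \<forall>x\<in>carrier M. (a ^^ m) x = \<zero>\<^bsub>M\<^esub>)"
proof -
  interpret M: abelian_group M using M by (rule lmodule_abelian_group)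
  obtain m where m: "0 < m"
    and cap: "{x \<in> carrier M. (a ^^ m) x = \<zero>\<^bsub>M\<^esub>} \<inter> (a ^^ m) ` carrier M = {\<zero>\<^bsub>M\<^esub>}"
    and span: "\<forall>x\<in>carrier M. \<exists>u\<in>{x \<in> carrier M. (a ^^ m) x = \<zero>\<^bsub>M\<^esub>}. \<exists>v\<in>(a ^^ m) ` carrier M.
                x = u \<oplus>\<^bsub>M\<^esub> v"
    by (rule fitting_decomposition[OF M fl a])
  define K where "K = {x \<in> carrier M. (a ^^ m) x = \<zero>\<^bsub>M\<^esub>}"
  have pow: "lhom R M M (a ^^ m)" using a by (rule lhom_funpow)
  have "direct_summand R M K"
    unfolding direct_summand_def K_def
    using lsubmodule_kernel[OF M M pow] lsubmodule_image[OF M M pow] cap span by blast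
  then have "K = {\<zero>\<^bsub>M\<^esub>} \<or> K = carrier M" by (rule indecomposable_summand_cases[OF ind])
  then show ?thesis
  proof
    assume K0: "K = {\<zero>\<^bsub>M\<^esub>}"
    have "inj_on (a ^^ m) (carrier M)"
    proof (rule lhom_inj_on[OF M M pow])
      fix x assume "x \<in> carrier M" and "(a ^^ m) x = \<zero>\<^bsub>M\<^esub>"
      then have "x \<in> K" unfolding K_def by simp
      then show "x = \<zero>\<^bsub>M\<^esub>" using K0 by simp
    qed
    moreover have "carrier M \<subseteq> (a ^^ m) ` carrier M"
    proof
      fix x assume "x \<in> carrier M"
      from bspec[OF span this] obtain u v
        where "u \<in> K" and v: "v \<in> (a ^^ m) ` carrier M" and x: "x = u \<oplus>\<^bsub>M\<^esub> v"
        unfolding K_def by blast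
      then have "u = \<zero>\<^bsub>M\<^esub>" using K0 by simp
      moreover have "v \<in> carrier M" using v lhom_closed[OF pow] by blast
      ultimately show "x \<in> (a ^^ m) ` carrier M" using x v by simp
    qed
    ultimately have "bij_betw (a ^^ m) (carrier M) (carrier M)"
      using lhom_closed[OF pow] unfolding bij_betw_def by blast
    moreover have "a ` carrier M \<subseteq> carrier M" using lhom_closed[OF a] by blast
    ultimately show ?thesis using bij_betw_if_funpow_bij[OF m] by blast
  next
    assume K: "K = carrier M"
    have "(a ^^ m) x = \<zero>\<^bsub>M\<^esub>" if "x \<in> carrier M" for x
    proof -
      have "x \<in> K" using that by (simp only: K)
      then show ?thesis by (simp add: K_def)
    qed
    then show ?thesis by blast
  qed
qed

definition local_end_ring :: "('a, 'r) ring_scheme \<Rightarrow> ('a, 'b, 'd) module_scheme \<Rightarrow> bool" where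
  "local_end_ring R M \<longleftrightarrow> (\<forall>a. lhom R M M a \<longrightarrow> \<not> bij_betw a (carrier M) (carrier M) \<longrightarrow>
     bij_betw (\<lambda>x. x \<ominus>\<^bsub>M\<^esub> a x) (carrier M) (carrier M))"

lemma local_end_ring_if_indecomposable:
  assumes M: "lmodule R M" and fl: "finite_length R M" and ind: "indecomposable R M"
  shows "local_end_ring R M"
  unfolding local_end_ring_def
proof (intro allI impI)
  interpret M: abelian_group M using M by (rule lmodule_abelian_group)
  fix a assume a: "lhom R M M a" and not_bij: "\<not> bij_betw a (carrier M) (carrier M)"
  obtain m where nil: "\<And>x. x \<in> carrier M \<Longrightarrow> (a ^^ m) x = \<zero>\<^bsub>M\<^esub>"
    using fitting_lemma[OF M fl ind a] not_bij by blast
  define b where "b x = x \<ominus>\<^bsub>M\<^esub> a x" for x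
  have b: "lhom R M M b" unfolding b_def by (rule lhom_minus_map[OF M lhom_id a])
  have b_ker: "x = \<zero>\<^bsub>M\<^esub>" if x: "x \<in> carrier M" and "b x = \<zero>\<^bsub>M\<^esub>" for x
  proof -
    have "a x = x"
      using that lhom_closed[OF a x] unfolding b_def by (simp add: M.minus_eq_zero_iff)
    then have "(a ^^ m) x = x" by (induction m) simp_all
    then show ?thesis using nil x by simp
  qed
  have "x = \<zero>\<^bsub>M\<^esub>" if x: "x \<in> carrier M" and "(b ^^ k) x = \<zero>\<^bsub>M\<^esub>" for k x
    using that
  proof (induction k arbitrary: x)
    case (Suc k)
    then have "b x = \<zero>\<^bsub>M\<^esub>"
      using lhom_closed[OF b] by (simp add: funpow_Suc_right del: funpow.simps)
    then show ?case using b_ker Suc.prems by blast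
  qed simp
  moreover have "carrier M \<noteq> {\<zero>\<^bsub>M\<^esub>}" using ind unfolding indecomposable_def by blast
  ultimately have "\<not> (\<exists>k. \<forall>x\<in>carrier M. (b ^^ k) x = \<zero>\<^bsub>M\<^esub>)"
    by blast
  then show "bij_betw b (carrier M) (carrier M)"
    using fitting_lemma[OF M fl ind b] by blast
qed

section \<open>Finite direct sums\<close>

lemma dsum_carrier:
  "f \<in> carrier (dsum M J) \<longleftrightarrow> (\<forall>j\<in>J. f j \<in> carrier (M j)) \<and> (\<forall>j. j \<notin> J \<longrightarrow> f j = undefined)"
  by (simp add: dsum_def)

lemma dsum_add: "f \<oplus>\<^bsub>dsum M J\<^esub> h = (\<lambda>j\<in>J. f j \<oplus>\<^bsub>M j\<^esub> h j)"
  by (simp add: dsum_def)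

lemma dsum_zero: "\<zero>\<^bsub>dsum M J\<^esub> = (\<lambda>j\<in>J. \<zero>\<^bsub>M j\<^esub>)"
  by (simp add: dsum_def)

lemma dsum_smult: "a \<odot>\<^bsub>dsum M J\<^esub> f = (\<lambda>j\<in>J. a \<odot>\<^bsub>M j\<^esub> f j)"
  by (simp add: dsum_def)

lemma dsum_eqI:
  "f \<in> carrier (dsum M J) \<Longrightarrow> h \<in> carrier (dsum M J) \<Longrightarrow> (\<And>j. j \<in> J \<Longrightarrow> f j = h j) \<Longrightarrow> f = h"
  by (rule ext) (metis dsum_carrier)

lemma abelian_group_dsum:
  assumes "\<And>j. j \<in> J \<Longrightarrow> abelian_group (M j)"
  shows "abelian_group (dsum M J)"
proof (rule abelian_groupI)
  note E = abelian_groupE[OF assms]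
  show "x \<oplus>\<^bsub>dsum M J\<^esub> y \<in> carrier (dsum M J)"
    if "x \<in> carrier (dsum M J)" "y \<in> carrier (dsum M J)" for x y
    using that E(1) by (simp add: dsum_carrier dsum_add)
  show "\<zero>\<^bsub>dsum M J\<^esub> \<in> carrier (dsum M J)"
    using E(2) by (simp add: dsum_carrier dsum_zero)
  show "x \<oplus>\<^bsub>dsum M J\<^esub> y \<oplus>\<^bsub>dsum M J\<^esub> z = x \<oplus>\<^bsub>dsum M J\<^esub> (y \<oplus>\<^bsub>dsum M J\<^esub> z)"
    if "x \<in> carrier (dsum M J)" "y \<in> carrier (dsum M J)" "z \<in> carrier (dsum M J)" for x y z
    unfolding dsum_add using that E(1,3) by (intro restrict_ext) (simp add: dsum_carrier)
  show "x \<oplus>\<^bsub>dsum M J\<^esub> y = y \<oplus>\<^bsub>dsum M J\<^esub> x"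
    if "x \<in> carrier (dsum M J)" "y \<in> carrier (dsum M J)" for x y
    unfolding dsum_add using that E(4) by (intro restrict_ext) (simp add: dsum_carrier)
  show "\<zero>\<^bsub>dsum M J\<^esub> \<oplus>\<^bsub>dsum M J\<^esub> x = x" if "x \<in> carrier (dsum M J)" for x
    using that E(1,2,5) by (intro dsum_eqI) (auto simp: dsum_carrier dsum_add dsum_zero)
  show "\<exists>y\<in>carrier (dsum M J). y \<oplus>\<^bsub>dsum M J\<^esub> x = \<zero>\<^bsub>dsum M J\<^esub>" if "x \<in> carrier (dsum M J)" for x
  proof
    show "(\<lambda>j\<in>J. \<ominus>\<^bsub>M j\<^esub> x j) \<in> carrier (dsum M J)"
      using that assms by (simp add: dsum_carrier abelian_group.a_inv_closed)
    show "(\<lambda>j\<in>J. \<ominus>\<^bsub>M j\<^esub> x j) \<oplus>\<^bsub>dsum M J\<^esub> x = \<zero>\<^bsub>dsum M J\<^esub>"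
      unfolding dsum_add dsum_zero using that assms
      by (intro restrict_ext) (simp add: dsum_carrier abelian_group.l_neg)
  qed
qed

lemma lmodule_dsum:
  assumes R: "ring R" and M: "\<And>j. j \<in> J \<Longrightarrow> lmodule R (M j)"
  shows "lmodule R (dsum M J)"
  unfolding lmodule_def
proof (intro conjI ballI R)
  show "abelian_group (dsum M J)" by (rule abelian_group_dsum) (rule lmodule_abelian_group[OF M])
  show "a \<odot>\<^bsub>dsum M J\<^esub> x \<in> carrier (dsum M J)"
    if "a \<in> carrier R" "x \<in> carrier (dsum M J)" for a x
    using that by (auto simp: dsum_carrier dsum_smult intro!: lmodule_smult_closed M)
  show "(a \<oplus>\<^bsub>R\<^esub> b) \<odot>\<^bsub>dsum M J\<^esub> x = a \<odot>\<^bsub>dsum M J\<^esub> x \<oplus>\<^bsub>dsum M J\<^esub> b \<odot>\<^bsub>dsum M J\<^esub> x"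
    if "a \<in> carrier R" "b \<in> carrier R" "x \<in> carrier (dsum M J)" for a b x
    unfolding dsum_smult dsum_add using that M by (intro restrict_ext) (simp add: dsum_carrier lmodule_def)
  show "a \<odot>\<^bsub>dsum M J\<^esub> (x \<oplus>\<^bsub>dsum M J\<^esub> y) = a \<odot>\<^bsub>dsum M J\<^esub> x \<oplus>\<^bsub>dsum M J\<^esub> a \<odot>\<^bsub>dsum M J\<^esub> y"
    if "a \<in> carrier R" "x \<in> carrier (dsum M J)" "y \<in> carrier (dsum M J)" for a x y
    unfolding dsum_smult dsum_add using that M by (intro restrict_ext) (simp add: dsum_carrier lmodule_def)
  show "(a \<otimes>\<^bsub>R\<^esub> b) \<odot>\<^bsub>dsum M J\<^esub> x = a \<odot>\<^bsub>dsum M J\<^esub> (b \<odot>\<^bsub>dsum M J\<^esub> x)"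
    if "a \<in> carrier R" "b \<in> carrier R" "x \<in> carrier (dsum M J)" for a b x
    unfolding dsum_smult using that M by (intro restrict_ext) (simp add: dsum_carrier lmodule_def)
  show "\<one>\<^bsub>R\<^esub> \<odot>\<^bsub>dsum M J\<^esub> x = x" if "x \<in> carrier (dsum M J)" for x
    using that M by (intro dsum_eqI) (auto simp: dsum_carrier dsum_smult lmodule_def)
qed

definition inj_dsum :: "('i \<Rightarrow> ('a, 'b) module) \<Rightarrow> 'i set \<Rightarrow> 'i \<Rightarrow> 'b \<Rightarrow> ('i \<Rightarrow> 'b)" where
  "inj_dsum M J j x = (\<lambda>l\<in>J. if l = j then x else \<zero>\<^bsub>M l\<^esub>)"

lemma lhom_inj_dsum:
  assumes M: "\<And>j. j \<in> J \<Longrightarrow> lmodule R (M j)" and j: "j \<in> J"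
  shows "lhom R (M j) (dsum M J) (inj_dsum M J j)"
proof -
  have zero: "\<zero>\<^bsub>M l\<^esub> \<in> carrier (M l)" and zero_add: "\<zero>\<^bsub>M l\<^esub> \<oplus>\<^bsub>M l\<^esub> \<zero>\<^bsub>M l\<^esub> = \<zero>\<^bsub>M l\<^esub>"
    if "l \<in> J" for l
    using abelian_group.axioms(1)[OF lmodule_abelian_group[OF M[OF that]]]
    by (simp_all add: abelian_monoid.zero_closed abelian_monoid.l_zero)
  show ?thesis
    unfolding lhom_def
    using j zero zero_add lmodule_smult_zero[OF M]
    by (auto simp: inj_dsum_def dsum_carrier dsum_add dsum_smult intro!: restrict_ext)
qed

lemma lhom_dsum_proj: "k \<in> J \<Longrightarrow> lhom R (dsum M J) (M k) (\<lambda>m. m k)"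
  by (simp add: lhom_def dsum_carrier dsum_add dsum_smult)

lemma dsum_finsum_apply:
  assumes R: "ring R" and M: "\<And>j. j \<in> J \<Longrightarrow> lmodule R (M j)" and k: "k \<in> J"
    and S: "finite S" and h: "\<And>s. s \<in> S \<Longrightarrow> h s \<in> carrier (dsum M J)"
  shows "finsum (dsum M J) h S k = finsum (M k) (\<lambda>s. h s k) S"
  using lhom_finsum[OF lmodule_dsum[OF R M] M[OF k] lhom_dsum_proj[OF k] S h] .

lemma dsum_eq_finsum_inj:
  assumes R: "ring R" and M: "\<And>j. j \<in> J \<Longrightarrow> lmodule R (M j)" and J: "finite J"
    and m: "m \<in> carrier (dsum M J)"
  shows "finsum (dsum M J) (\<lambda>l. inj_dsum M J l (m l)) J = m"
proof (rule dsum_eqI)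
  interpret DS: abelian_group "dsum M J" by (rule abelian_group_dsum) (rule lmodule_abelian_group[OF M])
  have inj: "inj_dsum M J l (m l) \<in> carrier (dsum M J)" if "l \<in> J" for l
    using lhom_closed[OF lhom_inj_dsum[where M = M and J = J, OF M that]] m that
    by (simp add: dsum_carrier)
  then show "finsum (dsum M J) (\<lambda>l. inj_dsum M J l (m l)) J \<in> carrier (dsum M J)"
    by (simp add: DS.finsum_closed)
  show "m \<in> carrier (dsum M J)" by (rule m)
  fix k assume k: "k \<in> J"
  interpret Mk: abelian_group "M k" using M[OF k] by (rule lmodule_abelian_group)
  have "finsum (dsum M J) (\<lambda>l. inj_dsum M J l (m l)) J k
      = finsum (M k) (\<lambda>l. if k = l then m l else \<zero>\<^bsub>M k\<^esub>) J"
    using dsum_finsum_apply[where h = "\<lambda>l. inj_dsum M J l (m l)", OF R M k J inj] k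
    by (simp add: inj_dsum_def eq_commute cong: if_cong)
  also have "\<dots> = finsum (M k) (\<lambda>l. if k = l then m k else \<zero>\<^bsub>M k\<^esub>) J"
    using m k by (intro Mk.finsum_cong') (auto simp: dsum_carrier)
  also have "\<dots> = m k"
    using m k J by (intro Mk.finsum_singleton) (auto simp: dsum_carrier)
  finally show "finsum (dsum M J) (\<lambda>l. inj_dsum M J l (m l)) J k = m k" .
qed

lemma lhom_dsum_expand:
  assumes R: "ring R" and M: "\<And>j. j \<in> J \<Longrightarrow> lmodule R (M j)" and J: "finite J"
    and N: "lmodule R N" and f: "lhom R (dsum M J) N f" and m: "m \<in> carrier (dsum M J)"
  shows "f m = finsum N (\<lambda>l. f (inj_dsum M J l (m l))) J"
proof -
  have "f m = f (finsum (dsum M J) (\<lambda>l. inj_dsum M J l (m l)) J)"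
    using dsum_eq_finsum_inj[OF R M J m] by simp
  also have "\<dots> = finsum N (\<lambda>l. f (inj_dsum M J l (m l))) J"
    using lhom_closed[OF lhom_inj_dsum[where M = M and J = J, OF M]] m
    by (intro lhom_finsum[OF lmodule_dsum[OF R M] N f J]) (auto simp: dsum_carrier)
  finally show ?thesis .
qed

section \<open>Direct summands\<close>

lemma direct_summand_kernel_of_retraction:
  assumes N: "lmodule R N" and P: "lmodule R P" and f: "lhom R N P f" and s: "lhom R P N s"
    and fs: "\<And>y. y \<in> carrier P \<Longrightarrow> f (s y) = y"
  shows "direct_summand R N {x \<in> carrier N. f x = \<zero>\<^bsub>P\<^esub>}"
proof -
  interpret N: abelian_group N using N by (rule lmodule_abelian_group)
  interpret P: abelian_group P using P by (rule lmodule_abelian_group)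
  have "{x \<in> carrier N. f x = \<zero>\<^bsub>P\<^esub>} \<inter> s ` carrier P = {\<zero>\<^bsub>N\<^esub>}"
  proof
    show "{x \<in> carrier N. f x = \<zero>\<^bsub>P\<^esub>} \<inter> s ` carrier P \<subseteq> {\<zero>\<^bsub>N\<^esub>}"
    proof
      fix x assume "x \<in> {x \<in> carrier N. f x = \<zero>\<^bsub>P\<^esub>} \<inter> s ` carrier P"
      then obtain y where "y \<in> carrier P" "x = s y" "f (s y) = \<zero>\<^bsub>P\<^esub>" by blast
      then show "x \<in> {\<zero>\<^bsub>N\<^esub>}" using fs lhom_zero[OF P N s] by simp
    qed
    have "s \<zero>\<^bsub>P\<^esub> \<in> s ` carrier P" by blast
    then show "{\<zero>\<^bsub>N\<^esub>} \<subseteq> {x \<in> carrier N. f x = \<zero>\<^bsub>P\<^esub>} \<inter> s ` carrier P"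
      using lhom_zero[OF N P f] lhom_zero[OF P N s] by simp
  qed
  moreover have "\<exists>u\<in>{x \<in> carrier N. f x = \<zero>\<^bsub>P\<^esub>}. \<exists>v\<in>s ` carrier P. x = u \<oplus>\<^bsub>N\<^esub> v"
    if x: "x \<in> carrier N" for x
  proof (intro bexI)
    have fx: "f x \<in> carrier P" and sfx: "s (f x) \<in> carrier N"
      using x lhom_closed[OF f] lhom_closed[OF s] by auto
    show "x = (x \<ominus>\<^bsub>N\<^esub> s (f x)) \<oplus>\<^bsub>N\<^esub> s (f x)"
      using x sfx by (simp add: N.minus_add_cancel)
    show "s (f x) \<in> s ` carrier P" using fx by blast
    show "x \<ominus>\<^bsub>N\<^esub> s (f x) \<in> {x \<in> carrier N. f x = \<zero>\<^bsub>P\<^esub>}"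
      using x fx sfx lhom_minus[OF N P f] fs by (simp add: P.minus_eq_zero_iff)
  qed
  ultimately show ?thesis
    unfolding direct_summand_def
    using lsubmodule_kernel[OF N P f] lsubmodule_image[OF P N s] by blast
qed

lemma direct_sum_unique:
  assumes N: "abelian_group N"
    and U: "lsubmodule R N U" and V: "lsubmodule R N V" and cap: "U \<inter> V = {\<zero>\<^bsub>N\<^esub>}"
    and u: "u \<in> U" "u' \<in> U" and v: "v \<in> V" "v' \<in> V"
    and eq: "u \<oplus>\<^bsub>N\<^esub> v = u' \<oplus>\<^bsub>N\<^esub> v'"
  shows "u = u'" and "v = v'"
proof -
  interpret N: abelian_group N by fact
  have closed: "u \<in> carrier N" "u' \<in> carrier N" "v \<in> carrier N" "v' \<in> carrier N"
    using U V u v unfolding lsubmodule_def by auto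
  define d where "d = \<ominus>\<^bsub>N\<^esub> u \<oplus>\<^bsub>N\<^esub> u'"
  have "v = \<ominus>\<^bsub>N\<^esub> u \<oplus>\<^bsub>N\<^esub> (u' \<oplus>\<^bsub>N\<^esub> v')"
    using eq closed by (simp add: N.add.inv_solve_left)
  then have v_eq: "v = d \<oplus>\<^bsub>N\<^esub> v'"
    using closed by (simp add: d_def N.a_assoc)
  then have "d = v \<oplus>\<^bsub>N\<^esub> \<ominus>\<^bsub>N\<^esub> v'"
    using closed by (simp add: d_def N.add.inv_solve_right)
  then have "d \<in> V" using V v unfolding lsubmodule_def by simp
  moreover have "d \<in> U" using U u unfolding d_def lsubmodule_def by simp
  ultimately have d0: "d = \<zero>\<^bsub>N\<^esub>" using cap by blast
  then show "v = v'" using v_eq closed by simp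
  show "u = u'" using d0 closed unfolding d_def by (simp add: N.add.inv_solve_left')
qed

locale complementary_submodules =
  fixes R :: "('a, 'c) ring_scheme" and N :: "('a, 'b, 'd) module_scheme" and U V :: "'b set"
  assumes lmodule: "lmodule R N" and U: "lsubmodule R N U" and V: "lsubmodule R N V"
    and cap: "U \<inter> V = {\<zero>\<^bsub>N\<^esub>}" and span: "\<forall>x\<in>carrier N. \<exists>u\<in>U. \<exists>v\<in>V. x = u \<oplus>\<^bsub>N\<^esub> v"
begin

definition proj :: "'b \<Rightarrow> 'b" where
  "proj x = (THE v. v \<in> V \<and> (\<exists>u\<in>U. x = u \<oplus>\<^bsub>N\<^esub> v))"

lemma submodules_closed:
  shows "\<And>u. u \<in> U \<Longrightarrow> u \<in> carrier N" and "\<And>v. v \<in> V \<Longrightarrow> v \<in> carrier N"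
    and "\<zero>\<^bsub>N\<^esub> \<in> U" and "\<zero>\<^bsub>N\<^esub> \<in> V"
    and "\<And>u u'. u \<in> U \<Longrightarrow> u' \<in> U \<Longrightarrow> u \<oplus>\<^bsub>N\<^esub> u' \<in> U"
    and "\<And>v v'. v \<in> V \<Longrightarrow> v' \<in> V \<Longrightarrow> v \<oplus>\<^bsub>N\<^esub> v' \<in> V"
    and "\<And>a u. a \<in> carrier R \<Longrightarrow> u \<in> U \<Longrightarrow> a \<odot>\<^bsub>N\<^esub> u \<in> U"
    and "\<And>a v. a \<in> carrier R \<Longrightarrow> v \<in> V \<Longrightarrow> a \<odot>\<^bsub>N\<^esub> v \<in> V"
  using U V unfolding lsubmodule_def by auto

lemma proj_decomp:
  assumes x: "x \<in> carrier N"
  shows "proj x \<in> V" and "\<exists>u\<in>U. x = u \<oplus>\<^bsub>N\<^esub> proj x"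
proof -
  have N: "abelian_group N" using lmodule by (rule lmodule_abelian_group)
  obtain u v where uv: "u \<in> U" "v \<in> V" "x = u \<oplus>\<^bsub>N\<^esub> v" using span x by blast
  have "w = v" if "w \<in> V" "u' \<in> U" "x = u' \<oplus>\<^bsub>N\<^esub> w" for u' w
  proof -
    have "u \<oplus>\<^bsub>N\<^esub> v = u' \<oplus>\<^bsub>N\<^esub> w" using uv(3) that(3) by (rule trans[OF sym])
    from direct_sum_unique(2)[OF N U V cap uv(1) that(2) uv(2) that(1) this] show ?thesis by (rule sym)
  qed
  then have "\<exists>!v. v \<in> V \<and> (\<exists>u\<in>U. x = u \<oplus>\<^bsub>N\<^esub> v)"
    using uv by blast
  then have "proj x \<in> V \<and> (\<exists>u\<in>U. x = u \<oplus>\<^bsub>N\<^esub> proj x)"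
    unfolding proj_def by (rule theI')
  then show "proj x \<in> V" and "\<exists>u\<in>U. x = u \<oplus>\<^bsub>N\<^esub> proj x" by blast+
qed

lemma proj_eq:
  assumes u: "u \<in> U" and v: "v \<in> V"
  shows "proj (u \<oplus>\<^bsub>N\<^esub> v) = v"
proof -
  have N: "abelian_group N" using lmodule by (rule lmodule_abelian_group)
  have uv: "u \<oplus>\<^bsub>N\<^esub> v \<in> carrier N"
    using submodules_closed(1)[OF u] submodules_closed(2)[OF v] abelian_monoid.a_closed[OF abelian_group.axioms(1)[OF N]] by blast
  obtain u' where u': "u' \<in> U" and eq: "u \<oplus>\<^bsub>N\<^esub> v = u' \<oplus>\<^bsub>N\<^esub> proj (u \<oplus>\<^bsub>N\<^esub> v)"
    using proj_decomp(2)[OF uv] by blast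
  from direct_sum_unique(2)[OF N U V cap u u' v proj_decomp(1)[OF uv] eq] show ?thesis by (rule sym)
qed

lemma proj_closed: "x \<in> carrier N \<Longrightarrow> proj x \<in> carrier N"
  using proj_decomp(1) submodules_closed(2) by blast

lemma lhom_proj: "lhom R N N proj"
  unfolding lhom_def
proof (intro conjI ballI proj_closed)
  interpret N: abelian_group N using lmodule by (rule lmodule_abelian_group)
  fix x y assume x: "x \<in> carrier N" and y: "y \<in> carrier N"
  obtain u u' where u: "u \<in> U" "x = u \<oplus>\<^bsub>N\<^esub> proj x" and u': "u' \<in> U" "y = u' \<oplus>\<^bsub>N\<^esub> proj y"
    using proj_decomp(2) x y by blast
  have "x \<oplus>\<^bsub>N\<^esub> y = (u \<oplus>\<^bsub>N\<^esub> proj x) \<oplus>\<^bsub>N\<^esub> (u' \<oplus>\<^bsub>N\<^esub> proj y)"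
    using u(2) u'(2) by (rule arg_cong2)
  also have "\<dots> = (u \<oplus>\<^bsub>N\<^esub> u') \<oplus>\<^bsub>N\<^esub> (proj x \<oplus>\<^bsub>N\<^esub> proj y)"
    using submodules_closed(1)[OF u(1)] submodules_closed(1)[OF u'(1)] proj_closed[OF x] proj_closed[OF y]
    by (simp add: N.a_ac)
  finally have "proj (x \<oplus>\<^bsub>N\<^esub> y) = proj ((u \<oplus>\<^bsub>N\<^esub> u') \<oplus>\<^bsub>N\<^esub> (proj x \<oplus>\<^bsub>N\<^esub> proj y))"
    by (rule arg_cong)
  also have "\<dots> = proj x \<oplus>\<^bsub>N\<^esub> proj y"
    using submodules_closed(5)[OF u(1) u'(1)] submodules_closed(6) proj_decomp(1)[OF x] proj_decomp(1)[OF y]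
    by (intro proj_eq) blast+
  finally show "proj (x \<oplus>\<^bsub>N\<^esub> y) = proj x \<oplus>\<^bsub>N\<^esub> proj y" .
next
  fix a x assume a: "a \<in> carrier R" and x: "x \<in> carrier N"
  obtain u where u: "u \<in> U" "x = u \<oplus>\<^bsub>N\<^esub> proj x" using proj_decomp(2) x by blast
  have "a \<odot>\<^bsub>N\<^esub> x = a \<odot>\<^bsub>N\<^esub> (u \<oplus>\<^bsub>N\<^esub> proj x)"
    using u(2) by (rule arg_cong)
  also have "\<dots> = a \<odot>\<^bsub>N\<^esub> u \<oplus>\<^bsub>N\<^esub> a \<odot>\<^bsub>N\<^esub> proj x"
    using a submodules_closed(1)[OF u(1)] proj_closed[OF x] by (rule lmodule_smult_add[OF lmodule])
  finally have "proj (a \<odot>\<^bsub>N\<^esub> x) = proj (a \<odot>\<^bsub>N\<^esub> u \<oplus>\<^bsub>N\<^esub> a \<odot>\<^bsub>N\<^esub> proj x)"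
    by (rule arg_cong)
  also have "\<dots> = a \<odot>\<^bsub>N\<^esub> proj x"
    using submodules_closed(7)[OF a u(1)] submodules_closed(8)[OF a proj_decomp(1)[OF x]]
    by (rule proj_eq)
  finally show "proj (a \<odot>\<^bsub>N\<^esub> x) = a \<odot>\<^bsub>N\<^esub> proj x" .
qed

lemma proj_kernel: "{x \<in> carrier N. proj x = \<zero>\<^bsub>N\<^esub>} = U"
proof
  interpret N: abelian_group N using lmodule by (rule lmodule_abelian_group)
  show "{x \<in> carrier N. proj x = \<zero>\<^bsub>N\<^esub>} \<subseteq> U"
  proof
    fix x assume "x \<in> {x \<in> carrier N. proj x = \<zero>\<^bsub>N\<^esub>}"
    then have x: "x \<in> carrier N" and px: "proj x = \<zero>\<^bsub>N\<^esub>" by auto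
    obtain u where u: "u \<in> U" "x = u \<oplus>\<^bsub>N\<^esub> proj x" using proj_decomp(2)[OF x] by blast
    have "x = u \<oplus>\<^bsub>N\<^esub> \<zero>\<^bsub>N\<^esub>" by (rule trans[OF u(2)]) (simp only: px)
    then show "x \<in> U" using submodules_closed(1)[OF u(1)] u(1) by simp
  qed
  show "U \<subseteq> {x \<in> carrier N. proj x = \<zero>\<^bsub>N\<^esub>}"
    using proj_eq[OF _ submodules_closed(4)] submodules_closed(1) by auto
qed

lemma proj_idem: "x \<in> carrier N \<Longrightarrow> proj (proj x) = proj x"
  using proj_eq[OF submodules_closed(3) proj_decomp(1)] proj_closed
    abelian_monoid.l_zero[OF abelian_group.axioms(1)[OF lmodule_abelian_group[OF lmodule]]]
  by simp

end

section \<open>Idempotent matrices over modules with local endomorphism rings\<close>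

definition idempotent_matrix ::
    "('a, 'r) ring_scheme \<Rightarrow> ('i \<Rightarrow> ('a, 'b) module) \<Rightarrow> 'i set \<Rightarrow> ('i \<Rightarrow> 'i \<Rightarrow> 'b \<Rightarrow> 'b) \<Rightarrow> bool" where
  "idempotent_matrix R M J E \<longleftrightarrow> (\<forall>k\<in>J. \<forall>j\<in>J. lhom R (M j) (M k) (E k j)) \<and>
     (\<forall>k\<in>J. \<forall>j\<in>J. \<forall>x\<in>carrier (M j). finsum (M k) (\<lambda>l. E k l (E l j x)) J = E k j x)"

text \<open>Column \<open>i\<close> of \<open>E\<close>, as a map from \<open>M i\<close> into the direct sum, is a split
  monomorphism up to an automorphism of \<open>M i\<close>.\<close>

definition split_column ::
    "('a, 'r) ring_scheme \<Rightarrow> ('i \<Rightarrow> ('a, 'b) module) \<Rightarrow> 'i set \<Rightarrow> ('i \<Rightarrow> 'i \<Rightarrow> 'b \<Rightarrow> 'b) \<Rightarrow> 'i \<Rightarrow> bool" where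
  "split_column R M J E i \<longleftrightarrow> (\<exists>\<Phi>. (\<forall>l\<in>J. lhom R (M l) (M i) (\<Phi> l)) \<and>
     bij_betw (\<lambda>x. finsum (M i) (\<lambda>l. \<Phi> l (E l i x)) J) (carrier (M i)) (carrier (M i)))"

text \<open>Write \<open>E = [[a, b], [c, d]]\<close> with pivot \<open>a = E i0 i0\<close>. As \<open>E\<close> has no split column,
  \<open>a\<close> is not an automorphism, so \<open>1 - a\<close> is one (the endomorphism ring is local). The Schur
  complement \<open>d + c (1 - a)\<^sup>-\<^sup>1 b\<close> is again idempotent without split columns, and it vanishes
  only if \<open>E\<close> does; this is the induction step for the theorem below.\<close>

locale schur_reduction =
  fixes R :: "('a, 'r) ring_scheme" and M :: "'i \<Rightarrow> ('a, 'b) module"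
    and i0 :: 'i and J' :: "'i set" and E :: "'i \<Rightarrow> 'i \<Rightarrow> 'b \<Rightarrow> 'b"
  assumes finite: "finite J'" and fresh: "i0 \<notin> J'"
    and modules: "\<And>j. j \<in> insert i0 J' \<Longrightarrow> lmodule R (M j)"
    and local_ends: "\<And>j. j \<in> insert i0 J' \<Longrightarrow> local_end_ring R (M j)"
    and idempotent: "idempotent_matrix R M (insert i0 J') E"
    and no_split: "\<And>i. i \<in> insert i0 J' \<Longrightarrow> \<not> split_column R M (insert i0 J') E i"
begin

lemma E_hom: "k \<in> insert i0 J' \<Longrightarrow> j \<in> insert i0 J' \<Longrightarrow> lhom R (M j) (M k) (E k j)"
  using idempotent unfolding idempotent_matrix_def by blast

lemma E_closed:
  "k \<in> insert i0 J' \<Longrightarrow> j \<in> insert i0 J' \<Longrightarrow> x \<in> carrier (M j) \<Longrightarrow> E k j x \<in> carrier (M k)"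
  by (rule lhom_closed[OF E_hom])

lemma sum_off_pivot:
  assumes k: "k \<in> insert i0 J'" and j: "j \<in> insert i0 J'" and x: "x \<in> carrier (M j)"
  shows "finsum (M k) (\<lambda>l. E k l (E l j x)) J' = E k j x \<ominus>\<^bsub>M k\<^esub> E k i0 (E i0 j x)"
proof -
  interpret Mk: abelian_group "M k" using modules[OF k] by (rule lmodule_abelian_group)
  have closed: "E k l (E l j x) \<in> carrier (M k)" if "l \<in> insert i0 J'" for l
    using E_closed[OF k that E_closed[OF that j x]] .
  have "finsum (M k) (\<lambda>l. E k l (E l j x)) (insert i0 J') = E k j x"
    using idempotent k j x unfolding idempotent_matrix_def by blast
  moreover have "finsum (M k) (\<lambda>l. E k l (E l j x)) (insert i0 J')
      = E k i0 (E i0 j x) \<oplus>\<^bsub>M k\<^esub> finsum (M k) (\<lambda>l. E k l (E l j x)) J'"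
    using closed by (rule lmodule_finsum_insert[OF modules[OF k] finite fresh])
  ultimately have "E k i0 (E i0 j x) \<oplus>\<^bsub>M k\<^esub> finsum (M k) (\<lambda>l. E k l (E l j x)) J' = E k j x"
    by simp
  then show ?thesis
    using closed by (intro Mk.eq_minus_if_add_eq) (auto intro: lmodule_finsum_closed[OF modules[OF k]])
qed

lemma pivot_not_bij: "\<not> bij_betw (E i0 i0) (carrier (M i0)) (carrier (M i0))"
proof -
  have M0: "lmodule R (M i0)" by (rule modules) simp
  interpret M0: abelian_group "M i0" using M0 by (rule lmodule_abelian_group)
  define \<Phi> where "\<Phi> l = (if l = i0 then (\<lambda>x. x) else (\<lambda>x. \<zero>\<^bsub>M i0\<^esub>))" for l
  have \<Phi>: "lhom R (M l) (M i0) (\<Phi> l)" for l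
    unfolding \<Phi>_def by (simp add: lhom_id lhom_zero_map[OF M0])
  have "finsum (M i0) (\<lambda>l. \<Phi> l (E l i0 x)) (insert i0 J') = E i0 i0 x" if x: "x \<in> carrier (M i0)" for x
  proof -
    have closed: "\<Phi> l (E l i0 x) \<in> carrier (M i0)" if "l \<in> insert i0 J'" for l
      using lhom_closed[OF \<Phi> E_closed[OF that _ x]] by simp
    have "finsum (M i0) (\<lambda>l. \<Phi> l (E l i0 x)) (insert i0 J')
        = \<Phi> i0 (E i0 i0 x) \<oplus>\<^bsub>M i0\<^esub> finsum (M i0) (\<lambda>l. \<Phi> l (E l i0 x)) J'"
      by (rule lmodule_finsum_insert[where f = "\<lambda>l. \<Phi> l (E l i0 x)", OF M0 finite fresh closed])
    also have "finsum (M i0) (\<lambda>l. \<Phi> l (E l i0 x)) J' = \<zero>\<^bsub>M i0\<^esub>"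
      using fresh by (intro lmodule_finsum_zero[OF M0]) (auto simp: \<Phi>_def)
    finally show ?thesis
      using E_closed[of i0 i0 x] x by (simp add: \<Phi>_def)
  qed
  then have "bij_betw (\<lambda>x. finsum (M i0) (\<lambda>l. \<Phi> l (E l i0 x)) (insert i0 J')) (carrier (M i0)) (carrier (M i0))
      = bij_betw (E i0 i0) (carrier (M i0)) (carrier (M i0))"
    by (rule bij_betw_cong)
  moreover have "\<not> split_column R M (insert i0 J') E i0" by (rule no_split) simp
  ultimately show ?thesis
    using \<Phi> unfolding split_column_def by blast
qed

definition pivot_inv :: "'b \<Rightarrow> 'b" where
  "pivot_inv = inv_into (carrier (M i0)) (\<lambda>x. x \<ominus>\<^bsub>M i0\<^esub> E i0 i0 x)"

lemma pivot_inv: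
  shows pivot_inv_hom: "lhom R (M i0) (M i0) pivot_inv"
    and pivot_inv_right: "\<And>y. y \<in> carrier (M i0) \<Longrightarrow> pivot_inv y \<ominus>\<^bsub>M i0\<^esub> E i0 i0 (pivot_inv y) = y"
proof -
  have hom: "lhom R (M i0) (M i0) (\<lambda>x. x \<ominus>\<^bsub>M i0\<^esub> E i0 i0 x)"
    by (intro lhom_minus_map lhom_id E_hom modules) simp_all
  have bij: "bij_betw (\<lambda>x. x \<ominus>\<^bsub>M i0\<^esub> E i0 i0 x) (carrier (M i0)) (carrier (M i0))"
    using local_ends[of i0] E_hom[of i0 i0] pivot_not_bij unfolding local_end_ring_def by simp
  show "lhom R (M i0) (M i0) pivot_inv"
    unfolding pivot_inv_def by (rule lhom_inv_into[OF modules hom bij]) simp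
  show "pivot_inv y \<ominus>\<^bsub>M i0\<^esub> E i0 i0 (pivot_inv y) = y" if "y \<in> carrier (M i0)" for y
    using bij_betw_inv_into_right[OF bij that] unfolding pivot_inv_def .
qed

lemma pivot_inv_closed: "y \<in> carrier (M i0) \<Longrightarrow> pivot_inv y \<in> carrier (M i0)"
  by (rule lhom_closed[OF pivot_inv_hom])

definition schur :: "'i \<Rightarrow> 'i \<Rightarrow> 'b \<Rightarrow> 'b" where
  "schur k j x = E k j x \<oplus>\<^bsub>M k\<^esub> E k i0 (pivot_inv (E i0 j x))"

lemma schur_hom:
  assumes "k \<in> J'" and "j \<in> J'"
  shows "lhom R (M j) (M k) (schur k j)"
proof -
  have "lhom R (M j) (M k) (\<lambda>x. E k i0 (pivot_inv (E i0 j x)))"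
    using assms by (intro lhom_comp[OF lhom_comp[OF E_hom pivot_inv_hom] E_hom]) simp_all
  then show ?thesis
    unfolding schur_def using assms by (intro lhom_add_map modules E_hom) simp_all
qed

lemma schur_closed: "k \<in> J' \<Longrightarrow> j \<in> J' \<Longrightarrow> x \<in> carrier (M j) \<Longrightarrow> schur k j x \<in> carrier (M k)"
  by (rule lhom_closed[OF schur_hom])

lemma sum_E_schur:
  assumes k: "k \<in> insert i0 J'" and j: "j \<in> J'" and x: "x \<in> carrier (M j)"
  shows "finsum (M k) (\<lambda>l. E k l (schur l j x)) J' = E k j x"
proof -
  have Mk: "lmodule R (M k)" using k by (rule modules)
  interpret Mk: abelian_group "M k" using Mk by (rule lmodule_abelian_group)
  have j': "j \<in> insert i0 J'" and i0: "i0 \<in> insert i0 J'" using j by simp_all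
  define y where "y = pivot_inv (E i0 j x)"
  have y: "y \<in> carrier (M i0)" unfolding y_def using pivot_inv_closed E_closed[OF i0 j' x] .
  have closed_x: "E k l (E l j x) \<in> carrier (M k)" and closed_y: "E k l (E l i0 y) \<in> carrier (M k)"
    if "l \<in> J'" for l
    using E_closed[OF k _ E_closed[OF _ j' x]] E_closed[OF k _ E_closed[OF _ i0 y]] that by simp_all
  have "finsum (M k) (\<lambda>l. E k l (schur l j x)) J'
      = finsum (M k) (\<lambda>l. E k l (E l j x) \<oplus>\<^bsub>M k\<^esub> E k l (E l i0 y)) J'"
  proof (rule lmodule_finsum_cong[OF Mk])
    fix l assume l: "l \<in> J'"
    then have l': "l \<in> insert i0 J'" by simp
    show "E k l (schur l j x) = E k l (E l j x) \<oplus>\<^bsub>M k\<^esub> E k l (E l i0 y)"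
      unfolding schur_def y_def[symmetric]
      by (rule lhom_add[OF E_hom[OF k l'] E_closed[OF l' j' x] E_closed[OF l' i0 y]])
    show "E k l (E l j x) \<oplus>\<^bsub>M k\<^esub> E k l (E l i0 y) \<in> carrier (M k)"
      using closed_x[OF l] closed_y[OF l] by simp
  qed
  also have "\<dots> = finsum (M k) (\<lambda>l. E k l (E l j x)) J' \<oplus>\<^bsub>M k\<^esub> finsum (M k) (\<lambda>l. E k l (E l i0 y)) J'"
    by (rule lmodule_finsum_addf[OF Mk closed_x closed_y])
  also have "\<dots> = (E k j x \<ominus>\<^bsub>M k\<^esub> E k i0 (E i0 j x)) \<oplus>\<^bsub>M k\<^esub> (E k i0 y \<ominus>\<^bsub>M k\<^esub> E k i0 (E i0 i0 y))"
    using sum_off_pivot[OF k j' x] sum_off_pivot[OF k i0 y] by simp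
  also have "E k i0 y \<ominus>\<^bsub>M k\<^esub> E k i0 (E i0 i0 y) = E k i0 (E i0 j x)"
    using lhom_minus[OF modules[OF i0] Mk E_hom[OF k i0] y E_closed[OF i0 i0 y]]
      pivot_inv_right[OF E_closed[OF i0 j' x]]
    by (simp add: y_def)
  also have "(E k j x \<ominus>\<^bsub>M k\<^esub> E k i0 (E i0 j x)) \<oplus>\<^bsub>M k\<^esub> E k i0 (E i0 j x) = E k j x"
    using E_closed[OF k j' x] E_closed[OF k i0 E_closed[OF i0 j' x]] by (rule Mk.minus_add_cancel)
  finally show ?thesis .
qed

lemma idempotent_schur: "idempotent_matrix R M J' schur"
  unfolding idempotent_matrix_def
proof (intro conjI ballI)
  show "lhom R (M j) (M k) (schur k j)" if "k \<in> J'" "j \<in> J'" for k j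
    using that by (rule schur_hom)
  fix k j x assume k: "k \<in> J'" and j: "j \<in> J'" and x: "x \<in> carrier (M j)"
  have k': "k \<in> insert i0 J'" and i0: "i0 \<in> insert i0 J'" using k by simp_all
  have Mk: "lmodule R (M k)" using k' by (rule modules)
  have closed_1: "E k l (schur l j x) \<in> carrier (M k)" and closed_0: "E i0 l (schur l j x) \<in> carrier (M i0)"
    if "l \<in> J'" for l
    using E_closed[OF k' _ schur_closed[OF that j x]] E_closed[OF i0 _ schur_closed[OF that j x]] that
    by simp_all
  have hom: "lhom R (M i0) (M k) (\<lambda>z. E k i0 (pivot_inv z))"
    by (rule lhom_comp[OF pivot_inv_hom E_hom[OF k' i0]])
  have "finsum (M k) (\<lambda>l. schur k l (schur l j x)) J'
      = finsum (M k) (\<lambda>l. E k l (schur l j x) \<oplus>\<^bsub>M k\<^esub> E k i0 (pivot_inv (E i0 l (schur l j x)))) J'"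
    by (simp only: schur_def[of k])
  also have "\<dots> = finsum (M k) (\<lambda>l. E k l (schur l j x)) J'
      \<oplus>\<^bsub>M k\<^esub> finsum (M k) (\<lambda>l. E k i0 (pivot_inv (E i0 l (schur l j x)))) J'"
    using closed_1 lhom_closed[OF hom closed_0] by (rule lmodule_finsum_addf[OF Mk])
  also have "finsum (M k) (\<lambda>l. E k i0 (pivot_inv (E i0 l (schur l j x)))) J'
      = E k i0 (pivot_inv (finsum (M i0) (\<lambda>l. E i0 l (schur l j x)) J'))"
    using closed_0 by (rule lhom_finsum[OF modules[OF i0] Mk hom finite, symmetric])
  also have "finsum (M i0) (\<lambda>l. E i0 l (schur l j x)) J' = E i0 j x"
    by (rule sum_E_schur[OF i0 j x])
  also have "finsum (M k) (\<lambda>l. E k l (schur l j x)) J' = E k j x"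
    by (rule sum_E_schur[OF k' j x])
  finally show "finsum (M k) (\<lambda>l. schur k l (schur l j x)) J' = schur k j x"
    unfolding schur_def .
qed

definition lift_row :: "'i \<Rightarrow> ('i \<Rightarrow> 'b \<Rightarrow> 'b) \<Rightarrow> 'i \<Rightarrow> 'b \<Rightarrow> 'b" where
  "lift_row i \<Phi> l = (if l = i0 then (\<lambda>z. finsum (M i) (\<lambda>l'. \<Phi> l' (E l' i0 (pivot_inv z))) J') else \<Phi> l)"

lemma lhom_lift_row:
  assumes i: "i \<in> J'" and \<Phi>: "\<And>l. l \<in> J' \<Longrightarrow> lhom R (M l) (M i) (\<Phi> l)" and l: "l \<in> insert i0 J'"
  shows "lhom R (M l) (M i) (lift_row i \<Phi> l)"
proof (cases "l = i0")
  case True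
  have "lhom R (M i0) (M i) (\<lambda>z. finsum (M i) (\<lambda>l'. \<Phi> l' (E l' i0 (pivot_inv z))) J')"
  proof (rule lhom_finsum_map[OF modules modules finite])
    fix l' assume "l' \<in> J'"
    then show "lhom R (M i0) (M i) (\<lambda>z. \<Phi> l' (E l' i0 (pivot_inv z)))"
      by (intro lhom_comp[OF lhom_comp[OF pivot_inv_hom E_hom] \<Phi>]) simp_all
  qed (use i in simp_all)
  then show ?thesis using True by (simp add: lift_row_def)
next
  case False
  then show ?thesis using l \<Phi> by (simp add: lift_row_def)
qed

lemma lift_row_column:
  assumes i: "i \<in> J'" and \<Phi>: "\<And>l. l \<in> J' \<Longrightarrow> lhom R (M l) (M i) (\<Phi> l)" and x: "x \<in> carrier (M i)"
  shows "finsum (M i) (\<lambda>l. lift_row i \<Phi> l (E l i x)) (insert i0 J') = finsum (M i) (\<lambda>l. \<Phi> l (schur l i x)) J'"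
proof -
  have i': "i \<in> insert i0 J'" and i0: "i0 \<in> insert i0 J'" using i by simp_all
  have Mi: "lmodule R (M i)" using i' by (rule modules)
  interpret Mi: abelian_group "M i" using Mi by (rule lmodule_abelian_group)
  define y where "y = pivot_inv (E i0 i x)"
  have y: "y \<in> carrier (M i0)" unfolding y_def using pivot_inv_closed E_closed[OF i0 i' x] .
  have closed_x: "\<Phi> l (E l i x) \<in> carrier (M i)" and closed_y: "\<Phi> l (E l i0 y) \<in> carrier (M i)"
    if "l \<in> J'" for l
    using lhom_closed[OF \<Phi>[OF that] E_closed[OF _ i' x]] lhom_closed[OF \<Phi>[OF that] E_closed[OF _ i0 y]]
      that by simp_all
  have closed: "lift_row i \<Phi> l (E l i x) \<in> carrier (M i)" if "l \<in> insert i0 J'" for l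
    using lhom_closed[OF lhom_lift_row[OF i \<Phi> that] E_closed[OF that i' x]] .
  have "finsum (M i) (\<lambda>l. lift_row i \<Phi> l (E l i x)) (insert i0 J')
      = lift_row i \<Phi> i0 (E i0 i x) \<oplus>\<^bsub>M i\<^esub> finsum (M i) (\<lambda>l. lift_row i \<Phi> l (E l i x)) J'"
    by (rule lmodule_finsum_insert[where f = "\<lambda>l. lift_row i \<Phi> l (E l i x)", OF Mi finite fresh closed])
  also have "finsum (M i) (\<lambda>l. lift_row i \<Phi> l (E l i x)) J' = finsum (M i) (\<lambda>l. \<Phi> l (E l i x)) J'"
    using fresh closed_x by (intro lmodule_finsum_cong[OF Mi]) (auto simp: lift_row_def)
  also have "lift_row i \<Phi> i0 (E i0 i x) = finsum (M i) (\<lambda>l. \<Phi> l (E l i0 y)) J'"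
    by (simp add: lift_row_def y_def)
  also have "finsum (M i) (\<lambda>l. \<Phi> l (E l i0 y)) J' \<oplus>\<^bsub>M i\<^esub> finsum (M i) (\<lambda>l. \<Phi> l (E l i x)) J'
      = finsum (M i) (\<lambda>l. \<Phi> l (E l i x) \<oplus>\<^bsub>M i\<^esub> \<Phi> l (E l i0 y)) J'"
    using closed_x closed_y
    by (simp add: Mi.a_comm lmodule_finsum_addf[OF Mi] lmodule_finsum_closed[OF Mi])
  also have "\<dots> = finsum (M i) (\<lambda>l. \<Phi> l (schur l i x)) J'"
  proof (rule lmodule_finsum_cong[OF Mi])
    fix l assume l: "l \<in> J'"
    then have l': "l \<in> insert i0 J'" by simp
    show "\<Phi> l (E l i x) \<oplus>\<^bsub>M i\<^esub> \<Phi> l (E l i0 y) = \<Phi> l (schur l i x)"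
      unfolding schur_def y_def[symmetric]
      by (rule lhom_add[OF \<Phi>[OF l] E_closed[OF l' i' x] E_closed[OF l' i0 y], symmetric])
    show "\<Phi> l (schur l i x) \<in> carrier (M i)"
      by (rule lhom_closed[OF \<Phi>[OF l] schur_closed[OF l i x]])
  qed
  finally show ?thesis .
qed

lemma no_split_schur:
  assumes i: "i \<in> J'"
  shows "\<not> split_column R M J' schur i"
proof
  assume "split_column R M J' schur i"
  then obtain \<Phi> where \<Phi>: "\<And>l. l \<in> J' \<Longrightarrow> lhom R (M l) (M i) (\<Phi> l)"
    and bij: "bij_betw (\<lambda>x. finsum (M i) (\<lambda>l. \<Phi> l (schur l i x)) J') (carrier (M i)) (carrier (M i))"
    unfolding split_column_def by blast
  have "bij_betw (\<lambda>x. finsum (M i) (\<lambda>l. lift_row i \<Phi> l (E l i x)) (insert i0 J'))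
      (carrier (M i)) (carrier (M i))"
    using bij lift_row_column[OF i \<Phi>] by (simp cong: bij_betw_cong)
  then have "split_column R M (insert i0 J') E i"
    using lhom_lift_row[OF i \<Phi>] unfolding split_column_def by blast
  then show False using no_split[of i] i by simp
qed

lemma E_eq_zero_if_schur_eq_zero:
  assumes schur0: "\<And>k j x. k \<in> J' \<Longrightarrow> j \<in> J' \<Longrightarrow> x \<in> carrier (M j) \<Longrightarrow> schur k j x = \<zero>\<^bsub>M k\<^esub>"
    and k: "k \<in> insert i0 J'" and j: "j \<in> insert i0 J'" and x: "x \<in> carrier (M j)"
  shows "E k j x = \<zero>\<^bsub>M k\<^esub>"
proof -
  have Mk: "lmodule R (M k)" using k by (rule modules)
  interpret Mk: abelian_group "M k" using Mk by (rule lmodule_abelian_group)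
  have i0: "i0 \<in> insert i0 J'" by simp
  have off_pivot: "E k l z = \<zero>\<^bsub>M k\<^esub>" if l: "l \<in> J'" and z: "z \<in> carrier (M l)" for l z
  proof -
    have "E k l z = finsum (M k) (\<lambda>l'. E k l' (schur l' l z)) J'"
      using sum_E_schur[OF k l z] by simp
    also have "\<dots> = \<zero>\<^bsub>M k\<^esub>"
    proof (rule lmodule_finsum_zero[OF Mk])
      fix l' assume l': "l' \<in> J'"
      then have "l' \<in> insert i0 J'" by simp
      then show "E k l' (schur l' l z) = \<zero>\<^bsub>M k\<^esub>"
        using schur0[OF l' l z] lhom_zero[OF modules Mk E_hom[OF k]] by simp
    qed
    finally show ?thesis .
  qed
  have pivot: "E k i0 z = \<zero>\<^bsub>M k\<^esub>" if z: "z \<in> carrier (M i0)" for z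
  proof -
    define w where "w = pivot_inv z"
    have w: "w \<in> carrier (M i0)" unfolding w_def using z by (rule pivot_inv_closed)
    have "finsum (M k) (\<lambda>l. E k l (E l i0 w)) J' = \<zero>\<^bsub>M k\<^esub>"
      using off_pivot E_closed[OF _ i0 w] by (intro lmodule_finsum_zero[OF Mk]) simp
    then have "E k i0 w \<ominus>\<^bsub>M k\<^esub> E k i0 (E i0 i0 w) = \<zero>\<^bsub>M k\<^esub>"
      using sum_off_pivot[OF k i0 w] by simp
    then have "E k i0 (w \<ominus>\<^bsub>M i0\<^esub> E i0 i0 w) = \<zero>\<^bsub>M k\<^esub>"
      using lhom_minus[OF modules[OF i0] Mk E_hom[OF k i0] w E_closed[OF i0 i0 w]] by simp
    then show ?thesis using pivot_inv_right[OF z] unfolding w_def by simp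
  qed
  show ?thesis
    using j off_pivot[OF _ x] pivot[of x] x by auto
qed

end

theorem idempotent_matrix_eq_zero_if_no_split_column:
  assumes "finite J"
    and "\<And>j. j \<in> J \<Longrightarrow> lmodule R (M j)" and "\<And>j. j \<in> J \<Longrightarrow> local_end_ring R (M j)"
    and "idempotent_matrix R M J E" and "\<And>i. i \<in> J \<Longrightarrow> \<not> split_column R M J E i"
    and "k \<in> J" and "j \<in> J" and "x \<in> carrier (M j)"
  shows "E k j x = \<zero>\<^bsub>M k\<^esub>"
  using assms
proof (induction J arbitrary: E k j x rule: finite_induct)
  case empty
  then show ?case by simp
next
  case (insert i0 J')
  interpret schur_reduction R M i0 J' E
    by unfold_locales (use insert in simp_all)
  have "schur k' j' x' = \<zero>\<^bsub>M k'\<^esub>" if "k' \<in> J'" "j' \<in> J'" "x' \<in> carrier (M j')" for k' j' x'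
    using insert.IH[OF _ _ idempotent_schur no_split_schur that] insert.prems(1,2) by simp
  then show ?case
    using insert.prems(5-7) by (rule E_eq_zero_if_schur_eq_zero)
qed

section \<open>Exchange with a proper direct summand\<close>

definition dsum_matrix ::
    "('i \<Rightarrow> ('a, 'b) module) \<Rightarrow> 'i set \<Rightarrow> (('i \<Rightarrow> 'b) \<Rightarrow> 'i \<Rightarrow> 'b) \<Rightarrow> 'i \<Rightarrow> 'i \<Rightarrow> 'b \<Rightarrow> 'b" where
  "dsum_matrix M J e k j x = e (inj_dsum M J j x) k"

context
  fixes R :: "('a, 'r) ring_scheme" and M :: "'i \<Rightarrow> ('a, 'b) module" and J :: "'i set"
    and e :: "('i \<Rightarrow> 'b) \<Rightarrow> 'i \<Rightarrow> 'b"
  assumes R: "ring R" and J: "finite J" and M: "\<And>j. j \<in> J \<Longrightarrow> lmodule R (M j)"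
    and e: "lhom R (dsum M J) (dsum M J) e"
begin

lemma lhom_dsum_coordinate: "k \<in> J \<Longrightarrow> lhom R (dsum M J) (M k) (\<lambda>m. e m k)"
  by (rule lhom_comp[OF e lhom_dsum_proj])

lemma lhom_dsum_matrix: "k \<in> J \<Longrightarrow> j \<in> J \<Longrightarrow> lhom R (M j) (M k) (dsum_matrix M J e k j)"
  unfolding dsum_matrix_def
  by (rule lhom_comp[OF lhom_inj_dsum[where M = M, OF M] lhom_dsum_coordinate])

lemma dsum_matrix_expand:
  "k \<in> J \<Longrightarrow> m \<in> carrier (dsum M J) \<Longrightarrow> e m k = finsum (M k) (\<lambda>l. dsum_matrix M J e k l (m l)) J"
  unfolding dsum_matrix_def by (rule lhom_dsum_expand[OF R M J M lhom_dsum_coordinate])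

lemma idempotent_dsum_matrix:
  assumes idem: "\<And>m. m \<in> carrier (dsum M J) \<Longrightarrow> e (e m) = e m"
  shows "idempotent_matrix R M J (dsum_matrix M J e)"
  unfolding idempotent_matrix_def
proof (intro conjI ballI lhom_dsum_matrix)
  fix k j x assume k: "k \<in> J" and j: "j \<in> J" and x: "x \<in> carrier (M j)"
  have inj: "inj_dsum M J j x \<in> carrier (dsum M J)"
    by (rule lhom_closed[OF lhom_inj_dsum[where M = M, OF M j] x])
  have "dsum_matrix M J e k j x = e (e (inj_dsum M J j x)) k"
    unfolding dsum_matrix_def using idem[OF inj] by simp
  also have "\<dots> = finsum (M k) (\<lambda>l. dsum_matrix M J e k l (dsum_matrix M J e l j x)) J"
    using dsum_matrix_expand[OF k lhom_closed[OF e inj]] unfolding dsum_matrix_def by simp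
  finally show "finsum (M k) (\<lambda>l. dsum_matrix M J e k l (dsum_matrix M J e l j x)) J = dsum_matrix M J e k j x"
    by (rule sym)
qed

lemma eq_zero_if_dsum_matrix_eq_zero:
  assumes zero: "\<And>k j x. k \<in> J \<Longrightarrow> j \<in> J \<Longrightarrow> x \<in> carrier (M j) \<Longrightarrow> dsum_matrix M J e k j x = \<zero>\<^bsub>M k\<^esub>"
    and m: "m \<in> carrier (dsum M J)"
  shows "e m = \<zero>\<^bsub>dsum M J\<^esub>"
proof (rule dsum_eqI)
  interpret N: abelian_group "dsum M J" using lmodule_dsum[OF R M] by (rule lmodule_abelian_group)
  show "e m \<in> carrier (dsum M J)" using lhom_closed[OF e m] .
  show "\<zero>\<^bsub>dsum M J\<^esub> \<in> carrier (dsum M J)" by (rule N.zero_closed)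
  fix k assume k: "k \<in> J"
  have "e m k = finsum (M k) (\<lambda>l. dsum_matrix M J e k l (m l)) J" by (rule dsum_matrix_expand[OF k m])
  also have "\<dots> = \<zero>\<^bsub>M k\<^esub>"
    using zero[OF k] m by (intro lmodule_finsum_zero[OF M[OF k]]) (simp add: dsum_carrier)
  finally show "e m k = \<zero>\<^bsub>dsum M J\<^esub> k" using k by (simp add: dsum_zero)
qed

end

theorem proper_direct_summand_exchange:
  assumes R: "ring R" and J: "finite J"
    and M: "\<And>j. j \<in> J \<Longrightarrow> lmodule R (M j)" and local_ends: "\<And>j. j \<in> J \<Longrightarrow> local_end_ring R (M j)"
    and U: "direct_summand R (dsum M J) U" and proper: "U \<noteq> carrier (dsum M J)"
  obtains i \<pi> where "i \<in> J" and "lhom R (dsum M J) (M i) \<pi>" and "\<And>u. u \<in> U \<Longrightarrow> \<pi> u = \<zero>\<^bsub>M i\<^esub>"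
    and "bij_betw (\<lambda>x. \<pi> (inj_dsum M J i x)) (carrier (M i)) (carrier (M i))"
proof -
  obtain V where "lsubmodule R (dsum M J) U" "lsubmodule R (dsum M J) V" "U \<inter> V = {\<zero>\<^bsub>dsum M J\<^esub>}"
    "\<forall>x\<in>carrier (dsum M J). \<exists>u\<in>U. \<exists>v\<in>V. x = u \<oplus>\<^bsub>dsum M J\<^esub> v"
    using U unfolding direct_summand_def by blast
  then interpret complementary_submodules R "dsum M J" U V
    using lmodule_dsum[OF R M] by unfold_locales
  define E where "E = dsum_matrix M J proj"
  have "\<exists>k\<in>J. \<exists>j\<in>J. \<exists>x\<in>carrier (M j). E k j x \<noteq> \<zero>\<^bsub>M k\<^esub>"
  proof (rule ccontr)
    assume zero: "\<not> ?thesis"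
    have "carrier (dsum M J) \<subseteq> U"
    proof
      fix m assume m: "m \<in> carrier (dsum M J)"
      have "proj m = \<zero>\<^bsub>dsum M J\<^esub>"
        by (rule eq_zero_if_dsum_matrix_eq_zero[OF R J M lhom_proj _ m]) (use zero in \<open>auto simp: E_def\<close>)
      then have "m \<in> {x \<in> carrier (dsum M J). proj x = \<zero>\<^bsub>dsum M J\<^esub>}" using m by simp
      then show "m \<in> U" by (simp only: proj_kernel)
    qed
    then show False using proper submodules_closed(1) by blast
  qed
  then obtain i where i: "i \<in> J" and "split_column R M J E i"
    using idempotent_matrix_eq_zero_if_no_split_column[where M = M, OF J M local_ends
        idempotent_dsum_matrix[OF R J M lhom_proj proj_idem]]
    unfolding E_def by blast
  then obtain \<Phi> where \<Phi>: "\<And>l. l \<in> J \<Longrightarrow> lhom R (M l) (M i) (\<Phi> l)"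
    and bij: "bij_betw (\<lambda>x. finsum (M i) (\<lambda>l. \<Phi> l (E l i x)) J) (carrier (M i)) (carrier (M i))"
    unfolding split_column_def by blast
  define \<pi> where "\<pi> m = finsum (M i) (\<lambda>l. \<Phi> l (proj m l)) J" for m
  show ?thesis
  proof (rule that[OF i])
    have "lhom R (dsum M J) (M i) (\<lambda>m. \<Phi> l (proj m l))" if "l \<in> J" for l
      by (rule lhom_comp[OF lhom_dsum_coordinate[OF R J M lhom_proj that] \<Phi>[OF that]])
    then show "lhom R (dsum M J) (M i) \<pi>"
      unfolding \<pi>_def by (rule lhom_finsum_map[OF lmodule M[OF i] J])
    show "\<pi> u = \<zero>\<^bsub>M i\<^esub>" if "u \<in> U" for u
    proof -
      have "proj u = \<zero>\<^bsub>dsum M J\<^esub>" using proj_kernel that by blast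
      moreover have "\<Phi> l \<zero>\<^bsub>M l\<^esub> = \<zero>\<^bsub>M i\<^esub>" if "l \<in> J" for l
        by (rule lhom_zero[OF M[OF that] M[OF i] \<Phi>[OF that]])
      ultimately show ?thesis
        unfolding \<pi>_def by (intro lmodule_finsum_zero[OF M[OF i]]) (simp add: dsum_zero)
    qed
    show "bij_betw (\<lambda>x. \<pi> (inj_dsum M J i x)) (carrier (M i)) (carrier (M i))"
      using bij unfolding \<pi>_def E_def dsum_matrix_def .
  qed
qed

section \<open>Forks\<close>

lemma not_left_minimal_if_retraction_kills:
  assumes N: "lmodule R N" and P: "lmodule R P" and f: "lhom R N P f" and s: "lhom R P N s"
    and fs: "\<And>y. y \<in> carrier P \<Longrightarrow> f (s y) = y"
    and g: "\<And>x. x \<in> carrier Xm \<Longrightarrow> g x \<in> carrier N" and kills: "\<And>x. x \<in> carrier Xm \<Longrightarrow> f (g x) = \<zero>\<^bsub>P\<^esub>"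
    and y: "y \<in> carrier P" "y \<noteq> \<zero>\<^bsub>P\<^esub>"
  shows "\<not> left_minimal R Xm N g"
proof -
  have "direct_summand R N {x \<in> carrier N. f x = \<zero>\<^bsub>P\<^esub>}"
    by (rule direct_summand_kernel_of_retraction[OF N P f s]) (rule fs)
  moreover have "g ` carrier Xm \<subseteq> {x \<in> carrier N. f x = \<zero>\<^bsub>P\<^esub>}"
    using g kills by blast
  moreover have "s y \<notin> {x \<in> carrier N. f x = \<zero>\<^bsub>P\<^esub>}"
    using fs[OF y(1)] y(2) by simp
  then have "{x \<in> carrier N. f x = \<zero>\<^bsub>P\<^esub>} \<noteq> carrier N"
    using lhom_closed[OF s y(1)] by blast
  ultimately show ?thesis unfolding left_minimal_def by blast
qed

lemma not_fork_if_in_sum_others: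
  assumes R: "ring R" and M: "\<And>i. i \<in> I \<Longrightarrow> lmodule R (M i)"
    and g: "\<And>i. i \<in> I \<Longrightarrow> lhom R Xm (M i) (g i)"
    and i: "i \<in> I" and x0: "x0 \<in> carrier Xm" "g i x0 \<noteq> \<zero>\<^bsub>M i\<^esub>"
    and sum: "in_sum_others R Xm M g I i"
  shows "\<not> fork R Xm M g I"
proof -
  obtain F p where F: "finite F" "F \<subseteq> I - {i}" and p: "\<And>j. j \<in> F \<Longrightarrow> lhom R (M j) (M i) (p j)"
    and g_i: "\<And>x. x \<in> carrier Xm \<Longrightarrow> g i x = finsum (M i) (\<lambda>j. p j (g j x)) F"
    using sum unfolding in_sum_others_def by blast
  define J where "J = insert i F"
  have J: "finite J" "J \<subseteq> I" and iJ: "i \<in> J" and FJ: "F \<subseteq> J" and iF: "i \<notin> F"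
    using F i by (auto simp: J_def)
  have MJ: "lmodule R (M j)" if "j \<in> J" for j using M J(2) that by blast
  have N: "lmodule R (dsum M J)" by (rule lmodule_dsum[OF R MJ])
  have Mi: "lmodule R (M i)" using i by (rule M)
  interpret Mi: abelian_group "M i" using Mi by (rule lmodule_abelian_group)
  define \<phi> where "\<phi> f = f i \<ominus>\<^bsub>M i\<^esub> finsum (M i) (\<lambda>j. p j (f j)) F" for f
  have "lhom R (dsum M J) (M i) (\<lambda>f. p j (f j))" if "j \<in> F" for j
    using that FJ
    by (intro lhom_comp[OF lhom_dsum_proj[where k = j and J = J and M = M and R = R] p[OF that]]) auto
  then have \<phi>: "lhom R (dsum M J) (M i) \<phi>"
    unfolding \<phi>_def
    by (intro lhom_minus_map[OF Mi lhom_dsum_proj[where M = M, OF iJ]] lhom_finsum_map[OF N Mi F(1)])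
  have retraction: "\<phi> (inj_dsum M J i y) = y" if "y \<in> carrier (M i)" for y
  proof -
    have "p j (inj_dsum M J i y j) = \<zero>\<^bsub>M i\<^esub>" if "j \<in> F" for j
      using that iF FJ lhom_zero[OF MJ Mi p] by (auto simp: inj_dsum_def)
    then have "finsum (M i) (\<lambda>j. p j (inj_dsum M J i y j)) F = \<zero>\<^bsub>M i\<^esub>"
      by (rule lmodule_finsum_zero[OF Mi])
    then show ?thesis using that iJ by (simp add: \<phi>_def inj_dsum_def Mi.minus_eq)
  qed
  have tuple: "tuple_map g J x \<in> carrier (dsum M J)" if "x \<in> carrier Xm" for x
    using that J(2) lhom_closed[OF g] by (auto simp: tuple_map_def dsum_carrier)
  have "\<phi> (tuple_map g J x) = \<zero>\<^bsub>M i\<^esub>" if x: "x \<in> carrier Xm" for x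
  proof -
    have "finsum (M i) (\<lambda>j. p j (tuple_map g J x j)) F = finsum (M i) (\<lambda>j. p j (g j x)) F"
      using FJ by (intro lmodule_finsum_cong[OF Mi])
        (auto simp: tuple_map_def intro!: lhom_closed[OF p] lhom_closed[OF g] x dest: subsetD[OF F(2)])
    then show ?thesis
      using iJ g_i[OF x] lhom_closed[OF g[OF i] x] by (simp add: \<phi>_def tuple_map_def Mi.r_neg Mi.minus_eq)
  qed
  then have "\<not> left_minimal R Xm (dsum M J) (tuple_map g J)"
    using tuple lhom_closed[OF g[OF i] x0(1)] x0(2) retraction
    by (intro not_left_minimal_if_retraction_kills[OF N Mi \<phi> lhom_inj_dsum[OF MJ iJ]])
  then show ?thesis unfolding fork_def using J by blast
qed

lemma solve_add_finsum_eq_zero: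
  assumes A: "lmodule R A" and P: "lmodule R P" and F: "finite F"
    and h: "lhom R A P h" and bij: "bij_betw h (carrier A) (carrier P)" and a: "a \<in> carrier A"
    and z: "\<And>l. l \<in> F \<Longrightarrow> z l \<in> carrier P" and sum: "h a \<oplus>\<^bsub>P\<^esub> finsum P z F = \<zero>\<^bsub>P\<^esub>"
  shows "a = finsum A (\<lambda>l. inv_into (carrier A) h (\<ominus>\<^bsub>P\<^esub> z l)) F"
proof -
  interpret P: abelian_group P using P by (rule lmodule_abelian_group)
  have "\<ominus>\<^bsub>P\<^esub> finsum P z F = h a"
    using sum z lhom_closed[OF h a] by (intro P.minus_equality) (simp_all add: P.finsum_closed Pi_iff)
  then have "a = inv_into (carrier A) h (\<ominus>\<^bsub>P\<^esub> finsum P z F)"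
    using bij_betw_inv_into_left[OF bij a] by simp
  also have "\<dots> = finsum A (\<lambda>l. inv_into (carrier A) h (\<ominus>\<^bsub>P\<^esub> z l)) F"
    using z by (intro lhom_finsum[OF P A lhom_comp[OF lhom_neg_map[OF P lhom_id] lhom_inv_into[OF A h bij]] F])
  finally show ?thesis .
qed

lemma in_sum_others_if_split_annihilator:
  assumes R: "ring R" and J: "finite J" "J \<subseteq> I" and i: "i \<in> J"
    and M: "\<And>j. j \<in> J \<Longrightarrow> lmodule R (M j)" and g: "\<And>j. j \<in> J \<Longrightarrow> lhom R Xm (M j) (g j)"
    and \<pi>: "lhom R (dsum M J) (M i) \<pi>"
    and kills: "\<And>x. x \<in> carrier Xm \<Longrightarrow> \<pi> (tuple_map g J x) = \<zero>\<^bsub>M i\<^esub>"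
    and bij: "bij_betw (\<lambda>y. \<pi> (inj_dsum M J i y)) (carrier (M i)) (carrier (M i))"
  shows "in_sum_others R Xm M g I i"
proof -
  have Mi: "lmodule R (M i)" using i by (rule M)
  define H where "H l y = \<pi> (inj_dsum M J l y)" for l y
  have H: "lhom R (M l) (M i) (H l)" if "l \<in> J" for l
    unfolding H_def by (rule lhom_comp[OF lhom_inj_dsum[where M = M, OF M that] \<pi>])
  define p where "p l y = inv_into (carrier (M i)) (H i) (\<ominus>\<^bsub>M i\<^esub> H l y)" for l y
  have p: "lhom R (M l) (M i) (p l)" if "l \<in> J" for l
    unfolding p_def using bij
    by (intro lhom_comp[OF H[OF that] lhom_comp[OF lhom_neg_map[OF Mi lhom_id] lhom_inv_into[OF Mi H[OF i]]]])
      (simp add: H_def[abs_def])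
  have "g i x = finsum (M i) (\<lambda>l. p l (g l x)) (J - {i})" if x: "x \<in> carrier Xm" for x
  proof -
    have gx: "g l x \<in> carrier (M l)" if "l \<in> J" for l by (rule lhom_closed[OF g[OF that] x])
    have Hgx: "H l (g l x) \<in> carrier (M i)" if "l \<in> J" for l by (rule lhom_closed[OF H[OF that] gx[OF that]])
    have "\<zero>\<^bsub>M i\<^esub> = finsum (M i) (\<lambda>l. H l (tuple_map g J x l)) J"
      unfolding H_def using kills[OF x] gx
      by (simp add: lhom_dsum_expand[OF R M J(1) Mi \<pi>] tuple_map_def dsum_carrier)
    also have "\<dots> = finsum (M i) (\<lambda>l. H l (g l x)) J"
      using Hgx by (intro lmodule_finsum_cong[OF Mi]) (simp_all add: tuple_map_def)
    also have "\<dots> = finsum (M i) (\<lambda>l. H l (g l x)) (insert i (J - {i}))"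
      using i by (simp add: insert_absorb)
    also have "\<dots> = H i (g i x) \<oplus>\<^bsub>M i\<^esub> finsum (M i) (\<lambda>l. H l (g l x)) (J - {i})"
      using J(1) Hgx i by (intro lmodule_finsum_insert[OF Mi]) auto
    finally show ?thesis
      unfolding p_def using Hgx bij gx[OF i] J(1)
      by (intro solve_add_finsum_eq_zero[OF Mi Mi _ H[OF i]]) (simp_all add: H_def[abs_def])
  qed
  then show ?thesis
    unfolding in_sum_others_def using J p by (intro exI[of _ "J - {i}"] exI[of _ p]) auto
qed

lemma fork_if_not_in_sum_others:
  assumes R: "ring R" and M: "\<And>i. i \<in> I \<Longrightarrow> lmodule R (M i)"
    and local_ends: "\<And>i. i \<in> I \<Longrightarrow> local_end_ring R (M i)"
    and g: "\<And>i. i \<in> I \<Longrightarrow> lhom R Xm (M i) (g i)"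
    and not_sum: "\<And>i. i \<in> I \<Longrightarrow> \<not> in_sum_others R Xm M g I i"
  shows "fork R Xm M g I"
  unfolding fork_def left_minimal_def
proof (intro allI impI notI)
  fix J assume "finite J \<and> J \<subseteq> I"
  then have J: "finite J" "J \<subseteq> I" by blast+
  assume "\<exists>U. direct_summand R (dsum M J) U \<and> U \<noteq> carrier (dsum M J) \<and> tuple_map g J ` carrier Xm \<subseteq> U"
  then obtain U where U: "direct_summand R (dsum M J) U" "U \<noteq> carrier (dsum M J)"
    and image: "tuple_map g J ` carrier Xm \<subseteq> U" by blast
  have MJ: "\<And>j. j \<in> J \<Longrightarrow> lmodule R (M j)" and gJ: "\<And>j. j \<in> J \<Longrightarrow> lhom R Xm (M j) (g j)"
    and localJ: "\<And>j. j \<in> J \<Longrightarrow> local_end_ring R (M j)"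
    using J(2) M g local_ends by blast+
  obtain i \<pi> where "i \<in> J" "lhom R (dsum M J) (M i) \<pi>" "\<And>u. u \<in> U \<Longrightarrow> \<pi> u = \<zero>\<^bsub>M i\<^esub>"
    "bij_betw (\<lambda>x. \<pi> (inj_dsum M J i x)) (carrier (M i)) (carrier (M i))"
    using proper_direct_summand_exchange[where M = M, OF R J(1) MJ localJ U] by metis
  then have "in_sum_others R Xm M g I i"
    using image by (intro in_sum_others_if_split_annihilator[where M = M, OF R J _ MJ gJ]) auto
  then show False using not_sum \<open>i \<in> J\<close> J(2) by blast
qed

theorem lemma13p1:
  fixes R :: "'a ring" and Xm :: "('a, 'c) module" and M :: "'i \<Rightarrow> ('a, 'b) module"
    and g :: "'i \<Rightarrow> 'c \<Rightarrow> 'b" and I :: "'i set"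
  assumes "artin_algebra R"
    and "lmodule R Xm" and "finite_length R Xm"
    and "\<forall>i\<in>I. lmodule R (M i) \<and> finite_length R (M i) \<and> indecomposable R (M i)"
    and "\<forall>i\<in>I. lhom R Xm (M i) (g i)"
    and "\<forall>i\<in>I. \<exists>x\<in>carrier Xm. g i x \<noteq> \<zero>\<^bsub>M i\<^esub>"
  shows "fork R Xm M g I \<longleftrightarrow> (\<forall>i\<in>I. \<not> in_sum_others R Xm M g I i)"
proof -
  have R: "ring R" using assms(2) by (simp add: lmodule_def)
  have M: "\<And>i. i \<in> I \<Longrightarrow> lmodule R (M i)" and g: "\<And>i. i \<in> I \<Longrightarrow> lhom R Xm (M i) (g i)"
    using assms(4,5) by blast+
  have local_ends: "\<And>i. i \<in> I \<Longrightarrow> local_end_ring R (M i)"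
    using assms(4) local_end_ring_if_indecomposable by blast
  show ?thesis
  proof
    show "\<forall>i\<in>I. \<not> in_sum_others R Xm M g I i" if "fork R Xm M g I"
      using that assms(6) not_fork_if_in_sum_others[OF R, of I M Xm g] M g by blast
    show "fork R Xm M g I" if "\<forall>i\<in>I. \<not> in_sum_others R Xm M g I i"
      using that M local_ends g by (intro fork_if_not_in_sum_others[OF R]) blast+
  qed
qed

end
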